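(* Let $\mathcal{M}$ be a relative category. Assume that for every $n\ge1$, every $0\le k\le n$ and every relative structure $W$ on $[n]=\{0<\dots<n\}$ satisfying (a) $W$ contains at least one non-identity relation, (b) $(0\le1)\in W$ if $k=0$, (c) $(n-1\le n)\in W$ if $k=n$, every relative functor $c\mathrm{Sd}^2\Lambda^k[n]\to\mathcal{M}$ extends to a relative functor $\xi(\underline n)\to\mathcal{M}$. Then $N_\xi\mathcal{M}$ is Reedy fibrant.
   Context: A relative category is a category with a subcategory of weak equivalences containing all objects; relative functors preserve weak equivalences. A relative structure $W$ on $[n]$ is a set of relations $i\le j$ containing identities and closed under composition. Given $W$, $\xi(\underline n)$ is the relative poset whose objects are strictly increasing chains $A_0\subsetneq\dots\subsetneq A_m$ ($m\ge0$) of non-empty subsets of $[n]$, with $B_\bullet\le A_\bullet$ iff each $B_j$ occurs among the $A_i$, a weak equivalence iff $(\min B_0\le\min A_0)\in W$. $c\mathrm{Sd}^2\Lambda^k[n]$ is the full subposet of chains with $A_m\notin\{[n],[n]\setminus\{k\}\}$, with induced relative structure. For a general relative poset $P$, $\xi P$ is defined likewise using chains of non-empty finite totally ordered subsets of $P$. With $\underline p=(0<\dots<p)$, $\check{\underline p}$ minimally and $\hat{\underline q}$ maximally relative, $N_\xi\mathcal{M}$ is the bisimplicial set $(p,q)\mapsto\mathrm{RelCat}(\xi(\check{\underline p}\times\hat{\underline q}),\mathcal{M})$; viewed as the simplicial object $p\mapsto(N_\xi\mathcal{M})_{p\bullet}$ in simplicial sets, it is Reedy fibrant if all matching maps are Kan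 fibrations. *)

theory Defs
  imports Main
begin

text \<open>A category presented by objects, hom-sets, identities and an object-indexed
composition (ccomp a b c g f = g o f for f : a -> b, g : b -> c), together with
a subcategory of weak equivalences containing all objects.\<close>

record ('o, 'm) relcat =
  cobj  :: "'o set"
  chom  :: "'o \<Rightarrow> 'o \<Rightarrow> 'm set"
  cid   :: "'o \<Rightarrow> 'm"
  ccomp :: "'o \<Rightarrow> 'o \<Rightarrow> 'o \<Rightarrow> 'm \<Rightarrow> 'm \<Rightarrow> 'm"
  cweq  :: "'o \<Rightarrow> 'o \<Rightarrow> 'm set"

definition relcat :: "('o, 'm) relcat \<Rightarrow> bool" where
  "relcat M \<longleftrightarrow>
     (\<forall>a\<in>cobj M. cid M a \<in> chom M a a) \<and>
     (\<forall>a\<in>cobj M. \<forall>b\<in>cobj M. \<forall>c\<in>cobj M. \<forall>f\<in>chom M a b. \<forall>g\<in>chom M b c.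
        ccomp M a b c g f \<in> chom M a c) \<and>
     (\<forall>a\<in>cobj M. \<forall>b\<in>cobj M. \<forall>f\<in>chom M a b.
        ccomp M a a b f (cid M a) = f \<and> ccomp M a b b (cid M b) f = f) \<and>
     (\<forall>a\<in>cobj M. \<forall>b\<in>cobj M. \<forall>c\<in>cobj M. \<forall>d\<in>cobj M.
        \<forall>f\<in>chom M a b. \<forall>g\<in>chom M b c. \<forall>h\<in>chom M c d.
        ccomp M a c d h (ccomp M a b c g f) = ccomp M a b d (ccomp M b c d h g) f) \<and>
     (\<forall>a\<in>cobj M. \<forall>b\<in>cobj M. cweq M a b \<subseteq> chom M a b) \<and>
     (\<forall>a\<in>cobj M. cid M a \<in> cweq M a a) \<and>
     (\<forall>a\<in>cobj M. \<forall>b\<in>cobj M. \<forall>c\<in>cobj M. \<forall>f\<in>cweq M a b. \<forall>g\<in>cweq M b c.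
        ccomp M a b c g f \<in> cweq M a c)"

record 'p relposet =
  pcar :: "'p set"
  ple  :: "'p \<Rightarrow> 'p \<Rightarrow> bool"
  pweq :: "'p \<Rightarrow> 'p \<Rightarrow> bool"

text \<open>Functors are represented extensionally (undefined off the carrier / off the order),
so that equality of functors is equality of these pairs.\<close>

definition relfun :: "'p relposet \<Rightarrow> ('o, 'm) relcat \<Rightarrow>
    ('p \<Rightarrow> 'o) \<times> ('p \<Rightarrow> 'p \<Rightarrow> 'm) \<Rightarrow> bool" where
  "relfun P M F \<longleftrightarrow>
     (\<forall>x\<in>pcar P. fst F x \<in> cobj M) \<and>
     (\<forall>x\<in>pcar P. \<forall>y\<in>pcar P. ple P x y \<longrightarrow> snd F x y \<in> chom M (fst F x) (fst F y)) \<and>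
     (\<forall>x\<in>pcar P. snd F x x = cid M (fst F x)) \<and>
     (\<forall>x\<in>pcar P. \<forall>y\<in>pcar P. \<forall>z\<in>pcar P. ple P x y \<longrightarrow> ple P y z \<longrightarrow>
        snd F x z = ccomp M (fst F x) (fst F y) (fst F z) (snd F y z) (snd F x y)) \<and>
     (\<forall>x\<in>pcar P. \<forall>y\<in>pcar P. ple P x y \<longrightarrow> pweq P x y \<longrightarrow>
        snd F x y \<in> cweq M (fst F x) (fst F y)) \<and>
     (\<forall>x. x \<notin> pcar P \<longrightarrow> fst F x = undefined) \<and>
     (\<forall>x y. \<not> (x \<in> pcar P \<and> y \<in> pcar P \<and> ple P x y) \<longrightarrow> snd F x y = undefined)"

definition pmin :: "'p relposet \<Rightarrow> 'p set \<Rightarrow> 'p" where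
  "pmin P A = (THE a. a \<in> A \<and> (\<forall>b\<in>A. ple P a b))"

text \<open>Objects: strictly increasing chains A_0 < ... < A_m (m >= 0) of non-empty finite
totally ordered subsets of P, represented as lists.\<close>

definition xi_car :: "'p relposet \<Rightarrow> 'p set list set" where
  "xi_car P = {As. As \<noteq> [] \<and> sorted_wrt (\<subset>) As \<and>
     (\<forall>A\<in>set As. A \<noteq> {} \<and> finite A \<and> A \<subseteq> pcar P \<and>
        (\<forall>a\<in>A. \<forall>b\<in>A. ple P a b \<or> ple P b a))}"

definition xi :: "'p relposet \<Rightarrow> 'p set list relposet" where
  "xi P = \<lparr> pcar = xi_car P,
            ple = (\<lambda>Bs As. set Bs \<subseteq> set As),
            pweq = (\<lambda>Bs As. set Bs \<subseteq> set As \<and> pweq P (pmin P (hd Bs)) (pmin P (hd As))) \<rparr>"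

definition ximap :: "('a \<Rightarrow> 'b) \<Rightarrow> 'a set list \<Rightarrow> 'b set list" where
  "ximap g As = remdups (map (\<lambda>A. g ` A) As)"

definition pullback :: "'a relposet \<Rightarrow> ('a \<Rightarrow> 'b) \<Rightarrow>
    ('b set list \<Rightarrow> 'o) \<times> ('b set list \<Rightarrow> 'b set list \<Rightarrow> 'm) \<Rightarrow>
    ('a set list \<Rightarrow> 'o) \<times> ('a set list \<Rightarrow> 'a set list \<Rightarrow> 'm)" where
  "pullback P g F =
     ((\<lambda>As. if As \<in> pcar (xi P) then fst F (ximap g As) else undefined),
      (\<lambda>As Bs. if As \<in> pcar (xi P) \<and> Bs \<in> pcar (xi P) \<and> ple (xi P) As Bs
               then snd F (ximap g As) (ximap g Bs) else undefined))"

definition relstruct :: "nat \<Rightarrow> (nat \<times> nat) set \<Rightarrow> bool" where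
  "relstruct n W \<longleftrightarrow> W \<subseteq> {(i, j). i \<le> j \<and> j \<le> n} \<and> (\<forall>i\<le>n. (i, i) \<in> W) \<and> trans W"

definition ordW :: "nat \<Rightarrow> (nat \<times> nat) set \<Rightarrow> nat relposet" where
  "ordW n W = \<lparr> pcar = {0..n}, ple = (\<le>), pweq = (\<lambda>i j. (i, j) \<in> W) \<rparr>"

definition cSd2horn :: "nat \<Rightarrow> nat \<Rightarrow> (nat \<times> nat) set \<Rightarrow> nat set list relposet" where
  "cSd2horn n k W =
     \<lparr> pcar = {As \<in> pcar (xi (ordW n W)). last As \<noteq> {0..n} \<and> last As \<noteq> {0..n} - {k}},
       ple = ple (xi (ordW n W)),
       pweq = pweq (xi (ordW n W)) \<rparr>"

definition horn_extension :: "('o, 'm) relcat \<Rightarrow> nat \<Rightarrow> nat \<Rightarrow> (nat \<times> nat) set \<Rightarrow> bool" where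
  "horn_extension M n k W \<longleftrightarrow>
     (\<forall>G. relfun (cSd2horn n k W) M G \<longrightarrow>
        (\<exists>F. relfun (xi (ordW n W)) M F \<and>
             (\<forall>x\<in>pcar (cSd2horn n k W). fst F x = fst G x) \<and>
             (\<forall>x\<in>pcar (cSd2horn n k W). \<forall>y\<in>pcar (cSd2horn n k W).
                ple (cSd2horn n k W) x y \<longrightarrow> snd F x y = snd G x y)))"

text \<open>check-p x hat-q: [p] x [q] with product order; (a,b) <= (c,d) is weak iff a = c.\<close>

definition prodpos :: "nat \<Rightarrow> nat \<Rightarrow> (nat \<times> nat) relposet" where
  "prodpos p q = \<lparr> pcar = {0..p} \<times> {0..q},
                   ple = (\<lambda>(a, b) (c, d). a \<le> c \<and> b \<le> d),
                   pweq = (\<lambda>(a, b) (c, d). a = c \<and> b \<le> d) \<rparr>"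

definition Nxi :: "('o, 'm) relcat \<Rightarrow> nat \<Rightarrow> nat \<Rightarrow>
    (((nat \<times> nat) set list \<Rightarrow> 'o) \<times> ((nat \<times> nat) set list \<Rightarrow> (nat \<times> nat) set list \<Rightarrow> 'm)) set" where
  "Nxi M p q = {F. relfun (xi (prodpos p q)) M F}"

definition delta :: "nat \<Rightarrow> nat \<Rightarrow> nat" where
  "delta i j = (if j < i then j else Suc j)"

definition hface where
  "hface p q i F = pullback (prodpos (p - 1) q) (\<lambda>(a, b). (delta i a, b)) F"

definition vface where
  "vface p q i F = pullback (prodpos p (q - 1)) (\<lambda>(a, b). (a, delta i b)) F"

text \<open>A map f : X -> Y of simplicial sets (given levelwise with faces d n i : X_n -> X_{n-1})
is a Kan fibration if every horn Lambda^k[n] -> X (a compatible family of faces x_i, i /= k)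
over an n-simplex y of Y has a filler over y.\<close>

definition kan_fibration :: "(nat \<Rightarrow> 'x set) \<Rightarrow> (nat \<Rightarrow> nat \<Rightarrow> 'x \<Rightarrow> 'x) \<Rightarrow>
    (nat \<Rightarrow> 'y set) \<Rightarrow> (nat \<Rightarrow> nat \<Rightarrow> 'y \<Rightarrow> 'y) \<Rightarrow> (nat \<Rightarrow> 'x \<Rightarrow> 'y) \<Rightarrow> bool" where
  "kan_fibration X dX Y dY f \<longleftrightarrow>
     (\<forall>n k y x. 1 \<le> n \<longrightarrow> k \<le> n \<longrightarrow> y \<in> Y n \<longrightarrow>
        (\<forall>i\<le>n. i \<noteq> k \<longrightarrow> x i \<in> X (n - 1)) \<longrightarrow>
        (\<forall>i j. 2 \<le> n \<longrightarrow> i < j \<longrightarrow> j \<le> n \<longrightarrow> i \<noteq> k \<longrightarrow> j \<noteq> k \<longrightarrow>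
            dX (n - 1) i (x j) = dX (n - 1) (j - 1) (x i)) \<longrightarrow>
        (\<forall>i\<le>n. i \<noteq> k \<longrightarrow> f (n - 1) (x i) = dY n i y) \<longrightarrow>
        (\<exists>z\<in>X n. f n z = y \<and> (\<forall>i\<le>n. i \<noteq> k \<longrightarrow> dX n i z = x i)))"

text \<open>Matching object M_p of the simplicial object p |-> (N_xi M)_{p,*} (p >= 1):
compatible (p+1)-tuples of (p-1)-simplices, as a simplicial set in q.\<close>

definition match_obj where
  "match_obj M p q = {t. (\<forall>i\<le>p. t i \<in> Nxi M (p - 1) q) \<and> (\<forall>i>p. t i = undefined) \<and>
      (2 \<le> p \<longrightarrow> (\<forall>i j. i < j \<longrightarrow> j \<le> p \<longrightarrow>
          hface (p - 1) q i (t j) = hface (p - 1) q (j - 1) (t i)))}"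

definition match_face where
  "match_face p q i t = (\<lambda>j. if j \<le> p then vface (p - 1) q i (t j) else undefined)"

definition match_map where
  "match_map p q F = (\<lambda>j. if j \<le> p then hface p q j F else undefined)"

text \<open>Reedy fibrancy: the matching maps X_p -> M_p X are Kan fibrations for all p
(for p = 0 the matching object is the point, i.e. X_0 is a Kan complex).\<close>

definition Nxi_reedy_fibrant :: "('o, 'm) relcat \<Rightarrow> bool" where
  "Nxi_reedy_fibrant M \<longleftrightarrow>
     kan_fibration (Nxi M 0) (vface 0) (\<lambda>_. (UNIV :: unit set)) (\<lambda>_ _ _. ()) (\<lambda>_ _. ()) \<and>
     (\<forall>p\<ge>1. kan_fibration (Nxi M p) (vface p) (match_obj M p) (match_face p) (match_map p))"

end

theory Submission
  imports Defs "HOL-Library.Product_Lexorder"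
begin

text \<open>
  Let X = [p] x [n], whose weak equivalences are the relations (a, b) \<le> (a, d). Lifting against
  the matching map of N_xi M at level p with respect to \<Lambda>^k[n] \<subseteq> \<Delta>^n means extending a relative
  functor that is given on the chains of xi X lying in a face of the horn
  \<partial>[p] x [n] \<union> [p] x \<Lambda>^k[n]; the face data agree on overlaps by the simplicial identities, so
  they glue. The remaining chains of X come in pairs T - {c T} \<subset> T, where the pivot c T lies
  directly below (k < n), resp. above (k = n), an element of T in the same column. Adding these
  pairs one at a time, smallest first, all other proper faces of T are already present, so each
  step extends a functor from cSd^2 \<Lambda>^k'[n'] to xi [n'] along an enumeration [n'] \<cong> T. The
  pivot and its neighbour are adjacent in this enumeration and weakly equivalent, which is exactly
  what the hypothesis on horn extensions needs, including the side conditions at k' = 0, n'.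
\<close>

section \<open>Relative posets, finite chains and the functor xi\<close>

definition is_relposet :: "'p relposet \<Rightarrow> bool" where
  "is_relposet P \<longleftrightarrow> (\<forall>x\<in>pcar P. ple P x x) \<and>
     (\<forall>x\<in>pcar P. \<forall>y\<in>pcar P. ple P x y \<longrightarrow> ple P y x \<longrightarrow> x = y) \<and>
     (\<forall>x\<in>pcar P. \<forall>y\<in>pcar P. \<forall>z\<in>pcar P. ple P x y \<longrightarrow> ple P y z \<longrightarrow> ple P x z) \<and>
     (\<forall>x\<in>pcar P. \<forall>y\<in>pcar P. pweq P x y \<longrightarrow> ple P x y)"

lemma is_relposetD:
  assumes "is_relposet P"
  shows "x \<in> pcar P \<Longrightarrow> ple P x x"
    and "x \<in> pcar P \<Longrightarrow> y \<in> pcar P \<Longrightarrow> ple P x y \<Longrightarrow> ple P y x \<Longrightarrow> x = y"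
    and "x \<in> pcar P \<Longrightarrow> y \<in> pcar P \<Longrightarrow> z \<in> pcar P \<Longrightarrow> ple P x y \<Longrightarrow> ple P y z \<Longrightarrow> ple P x z"
    and "x \<in> pcar P \<Longrightarrow> y \<in> pcar P \<Longrightarrow> pweq P x y \<Longrightarrow> ple P x y"
  using assms unfolding is_relposet_def by blast+

lemma is_relposet_restrict:
  assumes "is_relposet P" and "X \<subseteq> pcar P"
  shows "is_relposet (P\<lparr>pcar := X\<rparr>)"
  using assms unfolding is_relposet_def by (simp (no_asm)) blast

definition fin_chain :: "'p relposet \<Rightarrow> 'p set \<Rightarrow> bool" where
  "fin_chain P A \<longleftrightarrow> A \<noteq> {} \<and> finite A \<and> A \<subseteq> pcar P \<and> (\<forall>a\<in>A. \<forall>b\<in>A. ple P a b \<or> ple P b a)"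

lemma fin_chain_subset: "fin_chain P A \<Longrightarrow> B \<subseteq> A \<Longrightarrow> B \<noteq> {} \<Longrightarrow> fin_chain P B"
  unfolding fin_chain_def by (auto intro: finite_subset)

lemma fin_chain_restrict: "X \<subseteq> pcar P \<Longrightarrow> fin_chain (P\<lparr>pcar := X\<rparr>) A \<longleftrightarrow> fin_chain P A \<and> A \<subseteq> X"
  unfolding fin_chain_def by auto

lemma finite_fin_chains: "finite (pcar P) \<Longrightarrow> finite (Collect (fin_chain P))"
  by (rule finite_subset[of _ "Pow (pcar P)"]) (auto simp: fin_chain_def)

lemma fin_chain_has_least:
  assumes P: "is_relposet P" and A: "fin_chain P A"
  shows "\<exists>m\<in>A. \<forall>b\<in>A. ple P m b"
proof -
  have "finite A" "A \<noteq> {}" using A by (auto simp: fin_chain_def)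
  then show ?thesis
    using A
  proof (induction A rule: finite_ne_induct)
    case (singleton x)
    then show ?case using is_relposetD(1)[OF P] by (auto simp: fin_chain_def)
  next
    case (insert x F)
    then obtain m where m: "m \<in> F" "\<forall>b\<in>F. ple P m b"
      using fin_chain_subset[of P "insert x F" F] by auto
    have car: "insert x F \<subseteq> pcar P" and tot: "ple P x m \<or> ple P m x"
      using insert.prems m(1) by (auto simp: fin_chain_def)
    show ?case
    proof (cases "ple P x m")
      case True
      have "ple P x b" if "b \<in> F" for b
        using is_relposetD(3)[OF P, of x m b] True m that car by blast
      then show ?thesis using is_relposetD(1)[OF P, of x] car by auto
    next
      case False
      then show ?thesis using tot m by auto
    qed
  qed
qed

lemma pmin_eqI:
  assumes P: "is_relposet P" and A: "fin_chain P A" and "m \<in> A" "\<forall>b\<in>A. ple P m b"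
  shows "pmin P A = m"
  unfolding pmin_def
proof (rule the_equality)
  show "m \<in> A \<and> (\<forall>b\<in>A. ple P m b)" using assms by blast
  show "a = m" if "a \<in> A \<and> (\<forall>b\<in>A. ple P a b)" for a
    using is_relposetD(2)[OF P, of a m] that assms by (auto simp: fin_chain_def)
qed

lemma pmin_least:
  assumes "is_relposet P" and "fin_chain P A"
  shows "pmin P A \<in> A" and "\<forall>b\<in>A. ple P (pmin P A) b"
  using fin_chain_has_least[OF assms] pmin_eqI[OF assms] by metis+

lemma pmin_restrict [simp]: "pmin (P\<lparr>pcar := X\<rparr>) = pmin P"
  unfolding pmin_def by simp

lemma xi_car_iff:
  "As \<in> xi_car P \<longleftrightarrow> As \<noteq> [] \<and> sorted_wrt (\<subset>) As \<and> (\<forall>A\<in>set As. fin_chain P A)"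
  by (auto simp: xi_car_def fin_chain_def)

lemma xi_car_restrict:
  "X \<subseteq> pcar P \<Longrightarrow> xi_car (P\<lparr>pcar := X\<rparr>) = {As \<in> xi_car P. \<forall>A\<in>set As. A \<subseteq> X}"
  by (auto simp: xi_car_iff fin_chain_restrict subset_iff)

lemma sorted_wrt_psubset_distinct: "sorted_wrt (\<subset>) xs \<Longrightarrow> distinct xs"
  by (induction xs) auto

lemma sorted_wrt_psubset_last: "sorted_wrt (\<subset>) xs \<Longrightarrow> A \<in> set xs \<Longrightarrow> A \<subseteq> last xs"
proof (induction xs)
  case (Cons x xs)
  show ?case
  proof (cases "xs = []")
    case False
    then have "last xs \<in> set xs" by simp
    then have "x \<subseteq> last xs" using Cons.prems(1) by auto
    then show ?thesis using Cons False by (cases "A = x") auto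
  qed (use Cons in simp)
qed simp

lemma xi_car_fin_chain: "As \<in> xi_car P \<Longrightarrow> A \<in> set As \<Longrightarrow> fin_chain P A"
  by (simp add: xi_car_iff)

lemma xi_car_subset_last: "As \<in> xi_car P \<Longrightarrow> A \<in> set As \<Longrightarrow> A \<subseteq> last As"
  by (simp add: xi_car_iff sorted_wrt_psubset_last)

lemma xi_car_last_in: "As \<in> xi_car P \<Longrightarrow> last As \<in> set As"
  by (simp add: xi_car_iff)

lemma xi_car_hd_in: "As \<in> xi_car P \<Longrightarrow> hd As \<in> set As"
  by (simp add: xi_car_iff)

lemma xi_car_subset_pcar: "As \<in> xi_car P \<Longrightarrow> A \<in> set As \<Longrightarrow> A \<subseteq> pcar P"
  by (simp add: xi_car_iff fin_chain_def)

lemma xi_car_nonempty: "As \<in> xi_car P \<Longrightarrow> A \<in> set As \<Longrightarrow> A \<noteq> {}"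
  by (simp add: xi_car_iff fin_chain_def)

definition rel_injection :: "('a \<Rightarrow> 'b) \<Rightarrow> 'a relposet \<Rightarrow> 'b relposet \<Rightarrow> bool" where
  "rel_injection g P Q \<longleftrightarrow> (\<forall>x\<in>pcar P. g x \<in> pcar Q) \<and> inj_on g (pcar P) \<and>
     (\<forall>x\<in>pcar P. \<forall>y\<in>pcar P. ple P x y \<longrightarrow> ple Q (g x) (g y)) \<and>
     (\<forall>x\<in>pcar P. \<forall>y\<in>pcar P. pweq P x y \<longrightarrow> pweq Q (g x) (g y))"

definition rel_embedding :: "('a \<Rightarrow> 'b) \<Rightarrow> 'a relposet \<Rightarrow> 'b relposet \<Rightarrow> bool" where
  "rel_embedding g P Q \<longleftrightarrow> rel_injection g P Q \<and>
     (\<forall>x\<in>pcar P. \<forall>y\<in>pcar P. ple Q (g x) (g y) \<longrightarrow> ple P x y) \<and>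
     (\<forall>x\<in>pcar P. \<forall>y\<in>pcar P. pweq Q (g x) (g y) \<longrightarrow> pweq P x y)"

lemma rel_embedding_injection: "rel_embedding g P Q \<Longrightarrow> rel_injection g P Q"
  unfolding rel_embedding_def by blast

lemma rel_embedding_image_subset: "rel_embedding g P Q \<Longrightarrow> g ` pcar P \<subseteq> pcar Q"
  unfolding rel_embedding_def rel_injection_def by blast

lemma rel_embedding_inv_into:
  "rel_embedding g P Q \<Longrightarrow> rel_injection (inv_into (pcar P) g) (Q\<lparr>pcar := g ` pcar P\<rparr>) P"
  unfolding rel_embedding_def rel_injection_def
  by (auto simp: inv_into_f_f inv_into_into inj_on_inv_into)

lemma rel_injectionD:
  assumes "rel_injection g P Q"
  shows "x \<in> pcar P \<Longrightarrow> g x \<in> pcar Q" and "inj_on g (pcar P)"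
    and "x \<in> pcar P \<Longrightarrow> y \<in> pcar P \<Longrightarrow> ple P x y \<Longrightarrow> ple Q (g x) (g y)"
    and "x \<in> pcar P \<Longrightarrow> y \<in> pcar P \<Longrightarrow> pweq P x y \<Longrightarrow> pweq Q (g x) (g y)"
  using assms unfolding rel_injection_def by blast+

lemma fin_chain_image:
  assumes g: "rel_injection g P Q" and A: "fin_chain P A"
  shows "fin_chain Q (g ` A)"
proof -
  have A': "A \<noteq> {}" "finite A" "A \<subseteq> pcar P" and tot: "\<And>a b. a \<in> A \<Longrightarrow> b \<in> A \<Longrightarrow> ple P a b \<or> ple P b a"
    using A by (auto simp: fin_chain_def)
  have "ple Q (g a) (g b) \<or> ple Q (g b) (g a)" if "a \<in> A" "b \<in> A" for a b
    using tot[OF that] rel_injectionD(3)[OF g] that A'(3) by blast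
  moreover have "g ` A \<subseteq> pcar Q" using rel_injectionD(1)[OF g] A'(3) by blast
  ultimately show ?thesis using A'(1,2) unfolding fin_chain_def by blast
qed

lemma pmin_image:
  assumes "is_relposet P" "is_relposet Q" and g: "rel_injection g P Q" and A: "fin_chain P A"
  shows "pmin Q (g ` A) = g (pmin P A)"
proof (rule pmin_eqI[OF assms(2) fin_chain_image[OF g A]])
  have "A \<subseteq> pcar P" using A by (simp add: fin_chain_def)
  with pmin_least[OF assms(1) A] rel_injectionD(3)[OF g]
  show "g (pmin P A) \<in> g ` A" "\<forall>b\<in>g ` A. ple Q (g (pmin P A)) b"
    by blast+
qed

lemma set_ximap: "set (ximap g As) = (\<lambda>A. g ` A) ` set As"
  unfolding ximap_def by simp

lemma ximap_comp: "ximap f (ximap g As) = ximap (f \<circ> g) As"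
  unfolding ximap_def remdups_map_remdups by (simp add: image_comp comp_def)

lemma ximap_cong: "(\<And>A x. A \<in> set As \<Longrightarrow> x \<in> A \<Longrightarrow> f x = g x) \<Longrightarrow> ximap f As = ximap g As"
  unfolding ximap_def by (metis (no_types, lifting) image_cong map_eq_conv)

lemma ximap_ident:
  assumes "As \<in> xi_car P" and "\<And>A x. A \<in> set As \<Longrightarrow> x \<in> A \<Longrightarrow> f x = x"
  shows "ximap f As = As"
proof -
  have "ximap f As = ximap id As" by (rule ximap_cong) (use assms in auto)
  also have "\<dots> = As"
    using assms(1) by (simp add: ximap_def xi_car_iff sorted_wrt_psubset_distinct distinct_remdups_id)
  finally show ?thesis .
qed

lemma image_psubset_inj_on: "inj_on g X \<Longrightarrow> B \<subseteq> X \<Longrightarrow> A \<subset> B \<Longrightarrow> g ` A \<subset> g ` B"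
  by (metis image_mono inj_on_image_eq_iff psubset_eq subset_trans)

lemma sorted_wrt_psubset_map_image:
  assumes "inj_on g (pcar P)" and As: "As \<in> xi_car P"
  shows "sorted_wrt (\<subset>) (map (\<lambda>A. g ` A) As)"
  unfolding sorted_wrt_map
proof (rule sorted_wrt_mono_rel[of _ "(\<subset>)"])
  show "sorted_wrt (\<subset>) As" using As by (simp add: xi_car_iff)
  show "g ` A \<subset> g ` B" if "A \<in> set As" "B \<in> set As" "A \<subset> B" for A B
    using image_psubset_inj_on[OF assms(1) xi_car_subset_pcar[OF As that(2)] that(3)] .
qed

lemma ximap_eq_map:
  assumes g: "rel_injection g P Q" and As: "As \<in> xi_car P"
  shows "ximap g As = map (\<lambda>A. g ` A) As"
  using sorted_wrt_psubset_map_image[OF rel_injectionD(2)[OF g] As]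
  by (simp add: ximap_def sorted_wrt_psubset_distinct distinct_remdups_id)

lemma ximap_in_xi_car:
  assumes g: "rel_injection g P Q" and As: "As \<in> xi_car P"
  shows "ximap g As \<in> xi_car Q"
  using sorted_wrt_psubset_map_image[OF rel_injectionD(2)[OF g] As] As fin_chain_image[OF g]
  unfolding ximap_eq_map[OF g As] by (auto simp: xi_car_iff)

lemma hd_ximap: "rel_injection g P Q \<Longrightarrow> As \<in> xi_car P \<Longrightarrow> hd (ximap g As) = g ` hd As"
  by (simp add: ximap_eq_map xi_car_iff hd_map)

lemma last_ximap: "rel_injection g P Q \<Longrightarrow> As \<in> xi_car P \<Longrightarrow> last (ximap g As) = g ` last As"
  by (simp add: ximap_eq_map xi_car_iff last_map)

lemma pmin_hd_ximap:
  assumes "is_relposet P" "is_relposet Q" and g: "rel_injection g P Q" and As: "As \<in> xi_car P"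
  shows "pmin Q (hd (ximap g As)) = g (pmin P (hd As))"
  unfolding hd_ximap[OF g As]
  using pmin_image[OF assms(1,2) g] xi_car_fin_chain[OF As xi_car_hd_in[OF As]] by blast

lemma pmin_hd_in_pcar: "is_relposet P \<Longrightarrow> As \<in> xi_car P \<Longrightarrow> pmin P (hd As) \<in> pcar P"
  using pmin_least(1) xi_car_fin_chain xi_car_hd_in xi_car_subset_pcar by blast

lemma ximap_inv_into_ximap:
  assumes "rel_embedding g P Q" and As: "As \<in> xi_car P"
  shows "ximap (inv_into (pcar P) g) (ximap g As) = As"
proof -
  have "inj_on g (pcar P)" using assms(1) by (simp add: rel_embedding_def rel_injection_def)
  then show ?thesis
    unfolding ximap_comp
    by (intro ximap_ident[OF As]) (use xi_car_subset_pcar[OF As] in \<open>auto intro: inv_into_f_f\<close>)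
qed

lemma ximap_ximap_inv_into:
  assumes As: "As \<in> xi_car Q" and "\<forall>A\<in>set As. A \<subseteq> g ` X"
  shows "ximap g (ximap (inv_into X g) As) = As"
  unfolding ximap_comp
  using assms(2) by (intro ximap_ident[OF As]) (auto intro: f_inv_into_f)

section \<open>Relative functors on full subposets of xi and their pullbacks\<close>

definition xi_on :: "'p relposet \<Rightarrow> 'p set list set \<Rightarrow> 'p set list relposet" where
  "xi_on P C = (xi P)\<lparr>pcar := C\<rparr>"

lemma xi_simps [simp]:
  "pcar (xi P) = xi_car P"
  "ple (xi P) Bs As \<longleftrightarrow> set Bs \<subseteq> set As"
  "pweq (xi P) Bs As \<longleftrightarrow> set Bs \<subseteq> set As \<and> pweq P (pmin P (hd Bs)) (pmin P (hd As))"
  by (simp_all add: xi_def)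

lemma xi_on_simps [simp]:
  "pcar (xi_on P C) = C"
  "ple (xi_on P C) = ple (xi P)"
  "pweq (xi_on P C) = pweq (xi P)"
  by (simp_all add: xi_on_def)

lemma xi_eq_xi_on: "xi P = xi_on P (xi_car P)"
  by (simp add: xi_on_def)

lemma xi_on_restrict [simp]: "xi_on (P\<lparr>pcar := X\<rparr>) C = xi_on P C"
  by (simp add: xi_on_def xi_def)

lemma relfunD:
  assumes "relfun P M F"
  shows "x \<in> pcar P \<Longrightarrow> fst F x \<in> cobj M"
    and "x \<in> pcar P \<Longrightarrow> y \<in> pcar P \<Longrightarrow> ple P x y \<Longrightarrow> snd F x y \<in> chom M (fst F x) (fst F y)"
    and "x \<in> pcar P \<Longrightarrow> snd F x x = cid M (fst F x)"
    and "x \<in> pcar P \<Longrightarrow> y \<in> pcar P \<Longrightarrow> z \<in> pcar P \<Longrightarrow> ple P x y \<Longrightarrow> ple P y z \<Longrightarrow>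
        snd F x z = ccomp M (fst F x) (fst F y) (fst F z) (snd F y z) (snd F x y)"
    and "x \<in> pcar P \<Longrightarrow> y \<in> pcar P \<Longrightarrow> ple P x y \<Longrightarrow> pweq P x y \<Longrightarrow>
        snd F x y \<in> cweq M (fst F x) (fst F y)"
    and "x \<notin> pcar P \<Longrightarrow> fst F x = undefined"
    and "\<not> (x \<in> pcar P \<and> y \<in> pcar P \<and> ple P x y) \<Longrightarrow> snd F x y = undefined"
  using assms unfolding relfun_def by blast+

lemma relfunI:
  assumes "\<And>x. x \<in> pcar P \<Longrightarrow> fst F x \<in> cobj M"
    and "\<And>x y. x \<in> pcar P \<Longrightarrow> y \<in> pcar P \<Longrightarrow> ple P x y \<Longrightarrow> snd F x y \<in> chom M (fst F x) (fst F y)"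
    and "\<And>x. x \<in> pcar P \<Longrightarrow> snd F x x = cid M (fst F x)"
    and "\<And>x y z. x \<in> pcar P \<Longrightarrow> y \<in> pcar P \<Longrightarrow> z \<in> pcar P \<Longrightarrow> ple P x y \<Longrightarrow> ple P y z \<Longrightarrow>
        snd F x z = ccomp M (fst F x) (fst F y) (fst F z) (snd F y z) (snd F x y)"
    and "\<And>x y. x \<in> pcar P \<Longrightarrow> y \<in> pcar P \<Longrightarrow> ple P x y \<Longrightarrow> pweq P x y \<Longrightarrow>
        snd F x y \<in> cweq M (fst F x) (fst F y)"
    and "\<And>x. x \<notin> pcar P \<Longrightarrow> fst F x = undefined"
    and "\<And>x y. \<not> (x \<in> pcar P \<and> y \<in> pcar P \<and> ple P x y) \<Longrightarrow> snd F x y = undefined"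
  shows "relfun P M F"
  unfolding relfun_def by (intro conjI ballI allI impI; (rule assms; assumption))

definition pullback_on :: "'a set list set \<Rightarrow> ('a \<Rightarrow> 'b) \<Rightarrow>
    ('b set list \<Rightarrow> 'o) \<times> ('b set list \<Rightarrow> 'b set list \<Rightarrow> 'm) \<Rightarrow>
    ('a set list \<Rightarrow> 'o) \<times> ('a set list \<Rightarrow> 'a set list \<Rightarrow> 'm)" where
  "pullback_on C g F =
     ((\<lambda>As. if As \<in> C then fst F (ximap g As) else undefined),
      (\<lambda>As Bs. if As \<in> C \<and> Bs \<in> C \<and> set As \<subseteq> set Bs
               then snd F (ximap g As) (ximap g Bs) else undefined))"

lemma pullback_on_simps:
  "fst (pullback_on C g F) As = (if As \<in> C then fst F (ximap g As) else undefined)"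
  "snd (pullback_on C g F) As Bs =
     (if As \<in> C \<and> Bs \<in> C \<and> set As \<subseteq> set Bs then snd F (ximap g As) (ximap g Bs) else undefined)"
  by (simp_all add: pullback_on_def)

lemma pullback_eq_pullback_on: "pullback P g F = pullback_on (xi_car P) g F"
  by (simp add: pullback_def pullback_on_def)

lemma set_ximap_mono: "set Bs \<subseteq> set As \<Longrightarrow> set (ximap g Bs) \<subseteq> set (ximap g As)"
  by (auto simp: set_ximap)

lemma relfun_pullback_on:
  assumes P: "is_relposet P" and Q: "is_relposet Q" and g: "rel_injection g P Q"
    and C: "C \<subseteq> xi_car P" and CD: "\<And>As. As \<in> C \<Longrightarrow> ximap g As \<in> D"
    and F: "relfun (xi_on Q D) M F"
  shows "relfun (xi_on P C) M (pullback_on C g F)"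
proof -
  note FD = relfunD[OF F, simplified]
  have weq: "pweq Q (pmin Q (hd (ximap g Bs))) (pmin Q (hd (ximap g As)))"
    if "Bs \<in> C" "As \<in> C" "pweq P (pmin P (hd Bs)) (pmin P (hd As))" for As Bs
  proof -
    have "Bs \<in> xi_car P" "As \<in> xi_car P" using that C by auto
    then show ?thesis
      using rel_injectionD(4)[OF g pmin_hd_in_pcar[OF P] pmin_hd_in_pcar[OF P] that(3)]
      by (simp add: pmin_hd_ximap[OF P Q g])
  qed
  show ?thesis
    by (rule relfunI)
      (auto simp: pullback_on_simps CD set_ximap_mono weq
        intro: FD(1,3) FD(2)[OF CD CD set_ximap_mono] FD(5)[OF CD CD set_ximap_mono conjI[OF set_ximap_mono weq]]
          FD(4)[OF CD CD CD set_ximap_mono set_ximap_mono])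
qed

section \<open>Gluing relative functors along down-closed families of chains\<close>

definition xi_downclosed :: "'p relposet \<Rightarrow> 'p set list set \<Rightarrow> bool" where
  "xi_downclosed P C \<longleftrightarrow> C \<subseteq> xi_car P \<and> (\<forall>As\<in>C. \<forall>Bs\<in>xi_car P. set Bs \<subseteq> set As \<longrightarrow> Bs \<in> C)"

definition agrees_on :: "'a set \<Rightarrow> ('a \<Rightarrow> 'o) \<times> ('a \<Rightarrow> 'a \<Rightarrow> 'm) \<Rightarrow> ('a \<Rightarrow> 'o) \<times> ('a \<Rightarrow> 'a \<Rightarrow> 'm) \<Rightarrow> bool"
  where "agrees_on C F G \<longleftrightarrow> (\<forall>As\<in>C. fst F As = fst G As \<and> (\<forall>Bs. snd F Bs As = snd G Bs As))"

definition functors_agree where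
  "functors_agree P C1 G1 C2 G2 \<longleftrightarrow> (\<forall>As\<in>C1 \<inter> C2. fst G1 As = fst G2 As \<and>
      (\<forall>Bs\<in>xi_car P. set Bs \<subseteq> set As \<longrightarrow> snd G1 Bs As = snd G2 Bs As))"

lemma agrees_on_trans: "agrees_on C F G \<Longrightarrow> agrees_on C G H \<Longrightarrow> agrees_on C F H"
  by (simp add: agrees_on_def)

lemma agrees_on_subset: "agrees_on C F G \<Longrightarrow> D \<subseteq> C \<Longrightarrow> agrees_on D F G"
  by (auto simp: agrees_on_def)

lemma functors_agree_sym: "functors_agree P C1 G1 C2 G2 \<Longrightarrow> functors_agree P C2 G2 C1 G1"
  unfolding functors_agree_def by auto

lemma functors_agree_refl: "functors_agree P C G C G"
  unfolding functors_agree_def by auto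

lemma functors_agree_disjoint: "C1 \<inter> C2 = {} \<Longrightarrow> functors_agree P C1 G1 C2 G2"
  unfolding functors_agree_def by auto

definition glue where
  "glue I C G =
     ((\<lambda>As. if \<exists>i\<in>I. As \<in> C i then fst (G (SOME i. i \<in> I \<and> As \<in> C i)) As else undefined),
      (\<lambda>Bs As. if \<exists>i\<in>I. As \<in> C i then snd (G (SOME i. i \<in> I \<and> As \<in> C i)) Bs As else undefined))"

lemma glue_agrees_on:
  assumes dc: "\<forall>i\<in>I. xi_downclosed P (C i)" and G: "\<forall>i\<in>I. relfun (xi_on P (C i)) M (G i)"
    and ag: "\<forall>i\<in>I. \<forall>j\<in>I. functors_agree P (C i) (G i) (C j) (G j)"
    and i: "i \<in> I"
  shows "agrees_on (C i) (glue I C G) (G i)"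
  unfolding agrees_on_def
proof (intro ballI conjI allI)
  fix As Bs assume As: "As \<in> C i"
  define j where "j = (SOME i. i \<in> I \<and> As \<in> C i)"
  have j: "j \<in> I" "As \<in> C j" unfolding j_def by (rule someI2[of _ i]; use i As in blast)+
  have glue: "fst (glue I C G) As = fst (G j) As" "snd (glue I C G) Bs As = snd (G j) Bs As"
    using i As unfolding glue_def j_def by auto
  have agr: "functors_agree P (C j) (G j) (C i) (G i)" using ag i j(1) by blast
  then show "fst (glue I C G) As = fst (G i) As"
    using j As unfolding glue functors_agree_def by auto
  show "snd (glue I C G) Bs As = snd (G i) Bs As"
  proof (cases "Bs \<in> xi_car P \<and> set Bs \<subseteq> set As")
    case True
    then show ?thesis using agr j As unfolding glue functors_agree_def by auto
  next
    case False
    then have "\<not> (Bs \<in> C j \<and> set Bs \<subseteq> set As)" "\<not> (Bs \<in> C i \<and> set Bs \<subseteq> set As)"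
      using dc i j unfolding xi_downclosed_def by auto
    then show ?thesis
      unfolding glue using relfunD(7)[OF G[rule_format, OF j(1)], of Bs As]
        relfunD(7)[OF G[rule_format, OF i], of Bs As] by auto
  qed
qed

lemma relfun_glue:
  assumes dc: "\<forall>i\<in>I. xi_downclosed P (C i)" and G: "\<forall>i\<in>I. relfun (xi_on P (C i)) M (G i)"
    and ag: "\<forall>i\<in>I. \<forall>j\<in>I. functors_agree P (C i) (G i) (C j) (G j)"
  shows "relfun (xi_on P (\<Union>i\<in>I. C i)) M (glue I C G)"
proof -
  let ?F = "glue I C G"
  have val: "fst ?F As = fst (G i) As" "snd ?F Bs As = snd (G i) Bs As" if "i \<in> I" "As \<in> C i" for i As Bs
    using glue_agrees_on[OF dc G ag that(1)] that(2) unfolding agrees_on_def by auto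
  have down: "Bs \<in> C i" if "i \<in> I" "As \<in> C i" "Bs \<in> (\<Union>i\<in>I. C i)" "set Bs \<subseteq> set As" for i As Bs
    using that dc unfolding xi_downclosed_def by blast
  note GD = relfunD[OF G[rule_format], simplified]
  show ?thesis
  proof (rule relfunI; simp only: xi_on_simps xi_simps simp_thms)
    show "fst ?F x \<in> cobj M" if x: "x \<in> (\<Union>i\<in>I. C i)" for x
    proof -
      obtain i where i: "i \<in> I" "x \<in> C i" using x by blast
      then show ?thesis using GD(1)[OF i] by (simp add: val[OF i])
    qed
    show "snd ?F x y \<in> chom M (fst ?F x) (fst ?F y)"
      if xy: "x \<in> (\<Union>i\<in>I. C i)" "y \<in> (\<Union>i\<in>I. C i)" "set x \<subseteq> set y" for x y
    proof -
      obtain i where i: "i \<in> I" "y \<in> C i" using xy(2) by blast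
      have x: "x \<in> C i" using down[OF i xy(1,3)] .
      show ?thesis using GD(2)[OF i(1) x i(2) xy(3)] by (simp add: val[OF i] val[OF i(1) x])
    qed
    show "snd ?F x x = cid M (fst ?F x)" if x: "x \<in> (\<Union>i\<in>I. C i)" for x
    proof -
      obtain i where i: "i \<in> I" "x \<in> C i" using x by blast
      then show ?thesis using GD(3)[OF i] by (simp add: val[OF i])
    qed
    show "snd ?F x z = ccomp M (fst ?F x) (fst ?F y) (fst ?F z) (snd ?F y z) (snd ?F x y)"
      if xyz: "x \<in> (\<Union>i\<in>I. C i)" "y \<in> (\<Union>i\<in>I. C i)" "z \<in> (\<Union>i\<in>I. C i)"
        "set x \<subseteq> set y" "set y \<subseteq> set z" for x y z
    proof -
      obtain i where i: "i \<in> I" "z \<in> C i" using xyz(3) by blast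
      have y: "y \<in> C i" using down[OF i xyz(2,5)] .
      have x: "x \<in> C i" using down[OF i(1) y xyz(1,4)] .
      show ?thesis
        using GD(4)[OF i(1) x y i(2) xyz(4,5)] by (simp add: val[OF i] val[OF i(1) x] val[OF i(1) y])
    qed
    show "snd ?F x y \<in> cweq M (fst ?F x) (fst ?F y)"
      if xy: "x \<in> (\<Union>i\<in>I. C i)" "y \<in> (\<Union>i\<in>I. C i)" "set x \<subseteq> set y"
        "pweq P (pmin P (hd x)) (pmin P (hd y))" for x y
    proof -
      obtain i where i: "i \<in> I" "y \<in> C i" using xy(2) by blast
      have x: "x \<in> C i" using down[OF i xy(1,3)] .
      show ?thesis
        using GD(5)[OF i(1) x i(2) xy(3) conjI[OF xy(3,4)]] by (simp add: val[OF i] val[OF i(1) x])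
    qed
    show "fst ?F x = undefined" if "x \<notin> (\<Union>i\<in>I. C i)" for x
      using that unfolding glue_def by auto
    show "snd ?F x y = undefined"
      if xy: "\<not> (x \<in> (\<Union>i\<in>I. C i) \<and> y \<in> (\<Union>i\<in>I. C i) \<and> set x \<subseteq> set y)" for x y
    proof (cases "\<exists>i\<in>I. y \<in> C i")
      case True
      then obtain i where i: "i \<in> I" "y \<in> C i" by blast
      have "\<not> (x \<in> C i \<and> set x \<subseteq> set y)" using xy i by blast
      then show ?thesis using relfunD(7)[OF G[rule_format, OF i(1)], of x y] by (simp add: val[OF i])
    qed (auto simp: glue_def)
  qed
qed

lemma relfun_glue_two:
  assumes "xi_downclosed P C1" "xi_downclosed P C2"
    and "relfun (xi_on P C1) M G1" "relfun (xi_on P C2) M G2"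
    and "functors_agree P C1 G1 C2 G2"
  obtains G where "relfun (xi_on P (C1 \<union> C2)) M G" "agrees_on C1 G G1"
proof
  let ?C = "\<lambda>b. if b then C1 else C2" and ?G = "\<lambda>b. if b then G1 else G2"
  have ag: "\<forall>i\<in>UNIV. \<forall>j\<in>UNIV. functors_agree P (?C i) (?G i) (?C j) (?G j)"
    using assms(5) functors_agree_sym[OF assms(5)] by (auto simp: functors_agree_refl)
  have prems: "\<forall>i\<in>UNIV. xi_downclosed P (?C i)" "\<forall>i\<in>UNIV. relfun (xi_on P (?C i)) M (?G i)"
    using assms(1-4) by auto
  have "(\<Union>i\<in>UNIV. ?C i) = C1 \<union> C2" by auto
  then show "relfun (xi_on P (C1 \<union> C2)) M (glue UNIV ?C ?G)"
    using relfun_glue[OF prems ag] by simp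
  show "agrees_on C1 (glue UNIV ?C ?G) G1"
    using glue_agrees_on[OF prems ag, of True] by simp
qed

section \<open>Extending a relative functor over one horn\<close>

definition xi_over :: "'p relposet \<Rightarrow> 'p set set \<Rightarrow> 'p set list set" where
  "xi_over P L = {As \<in> xi_car P. set As \<subseteq> L}"

definition chain_complex :: "'p relposet \<Rightarrow> 'p set set \<Rightarrow> bool" where
  "chain_complex P L \<longleftrightarrow> (\<forall>A\<in>L. fin_chain P A) \<and> (\<forall>A\<in>L. \<forall>B. B \<subseteq> A \<longrightarrow> B \<noteq> {} \<longrightarrow> B \<in> L)"

definition chain_enum :: "'p relposet \<Rightarrow> (nat \<Rightarrow> 'p) \<Rightarrow> nat \<Rightarrow> bool" where
  "chain_enum P h n \<longleftrightarrow> (\<forall>i\<le>n. h i \<in> pcar P) \<and>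
     (\<forall>i j. i < j \<longrightarrow> j \<le> n \<longrightarrow> ple P (h i) (h j) \<and> h i \<noteq> h j)"

definition induced_relstruct :: "'p relposet \<Rightarrow> (nat \<Rightarrow> 'p) \<Rightarrow> nat \<Rightarrow> (nat \<times> nat) set" where
  "induced_relstruct P h n = {(i, j). i \<le> j \<and> j \<le> n \<and> pweq P (h i) (h j)}"

lemma xi_downclosed_xi_over: "xi_downclosed P (xi_over P L)"
  unfolding xi_downclosed_def xi_over_def by auto

lemma xi_downclosed_xi_car_restrict:
  "X \<subseteq> pcar P \<Longrightarrow> xi_downclosed P (xi_car (P\<lparr>pcar := X\<rparr>))"
  unfolding xi_downclosed_def xi_car_restrict by auto

lemma xi_over_fin_chains: "xi_over P (Collect (fin_chain P)) = xi_car P"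
  unfolding xi_over_def by (auto simp: xi_car_iff)

lemma ordW_simps [simp]:
  "pcar (ordW n W) = {0..n}" "ple (ordW n W) = (\<le>)" "pweq (ordW n W) i j \<longleftrightarrow> (i, j) \<in> W"
  by (simp_all add: ordW_def)

lemma is_relposet_ordW: "W \<subseteq> {(i, j). i \<le> j} \<Longrightarrow> is_relposet (ordW n W)"
  unfolding is_relposet_def by auto

lemma chain_enum_le:
  assumes P: "is_relposet P" and h: "chain_enum P h n" and ij: "i \<le> n" "j \<le> n"
  shows "ple P (h i) (h j) \<longleftrightarrow> i \<le> j"
proof (cases i j rule: linorder_cases)
  case greater
  then have "ple P (h j) (h i)" "h j \<noteq> h i" "h i \<in> pcar P" "h j \<in> pcar P"
    using h ij unfolding chain_enum_def by auto
  then show ?thesis using greater is_relposetD(2)[OF P] by auto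
qed (use h ij is_relposetD(1)[OF P] in \<open>auto simp: chain_enum_def\<close>)

lemma chain_enum_inj: "chain_enum P h n \<Longrightarrow> inj_on h {0..n}"
  unfolding chain_enum_def inj_on_def by (metis atLeastAtMost_iff linorder_neqE_nat)

lemma rel_embedding_chain_enum:
  assumes P: "is_relposet P" and h: "chain_enum P h n"
  shows "rel_embedding h (ordW n (induced_relstruct P h n)) P"
  unfolding rel_embedding_def rel_injection_def ordW_simps
proof (intro conjI ballI impI)
  fix i j assume ij: "i \<in> {0..n}" "j \<in> {0..n}"
  have car: "h i \<in> pcar P" "h j \<in> pcar P" using h ij by (simp_all add: chain_enum_def)
  then show "h i \<in> pcar P" by simp
  note le = chain_enum_le[OF P h, of i j]
  show "ple P (h i) (h j)" if "i \<le> j" using le that ij by simp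
  show "i \<le> j" if "ple P (h i) (h j)" using le that ij by simp
  show "pweq P (h i) (h j)" if "(i, j) \<in> induced_relstruct P h n"
    using that by (simp add: induced_relstruct_def)
  show "(i, j) \<in> induced_relstruct P h n" if "pweq P (h i) (h j)"
    using that le ij is_relposetD(4)[OF P car] by (simp add: induced_relstruct_def)
qed (rule chain_enum_inj[OF h])

lemma xi_over_insert_simplex:
  assumes L: "chain_complex P L" and T: "T \<subseteq> pcar P"
    and faces: "\<And>B. B \<subseteq> T \<Longrightarrow> B \<noteq> {} \<Longrightarrow> B \<noteq> T \<Longrightarrow> B \<noteq> T - {t} \<Longrightarrow> B \<in> L"
  shows "xi_over P L \<union> xi_car (P\<lparr>pcar := T\<rparr>) = xi_over P (L \<union> {T, T - {t}})"
proof (intro equalityI subsetI)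
  fix As assume "As \<in> xi_over P L \<union> xi_car (P\<lparr>pcar := T\<rparr>)"
  then consider "As \<in> xi_over P L" | "As \<in> xi_car P" "\<forall>A\<in>set As. A \<subseteq> T"
    unfolding xi_car_restrict[OF T] by blast
  then show "As \<in> xi_over P (L \<union> {T, T - {t}})"
  proof cases
    case 2
    have "A \<in> L \<union> {T, T - {t}}" if "A \<in> set As" for A
      using faces[of A] 2 xi_car_nonempty[OF 2(1) that] that by blast
    then show ?thesis using 2(1) by (auto simp: xi_over_def)
  qed (auto simp: xi_over_def)
next
  fix As assume "As \<in> xi_over P (L \<union> {T, T - {t}})"
  then have As: "As \<in> xi_car P" "set As \<subseteq> L \<union> {T, T - {t}}" by (auto simp: xi_over_def)
  show "As \<in> xi_over P L \<union> xi_car (P\<lparr>pcar := T\<rparr>)"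
  proof (cases "last As \<in> L")
    case True
    then have "set As \<subseteq> L"
      using L xi_car_subset_last[OF As(1)] xi_car_nonempty[OF As(1)] unfolding chain_complex_def by blast
    then show ?thesis using As(1) by (simp add: xi_over_def)
  next
    case False
    then have "last As \<subseteq> T" using As xi_car_last_in[OF As(1)] by auto
    then show ?thesis using As(1) xi_car_subset_last[OF As(1)] by (auto simp: xi_car_restrict[OF T])
  qed
qed


lemma chain_complex_insert_simplex:
  assumes L: "chain_complex P L" and T: "fin_chain P T" "fin_chain P (T - {t})"
    and faces: "\<And>B. B \<subseteq> T \<Longrightarrow> B \<noteq> {} \<Longrightarrow> B \<noteq> T \<Longrightarrow> B \<noteq> T - {t} \<Longrightarrow> B \<in> L"
  shows "chain_complex P (L \<union> {T, T - {t}})"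
  unfolding chain_complex_def
proof (intro conjI ballI allI impI)
  fix A assume "A \<in> L \<union> {T, T - {t}}"
  then show "fin_chain P A" using L T unfolding chain_complex_def by blast
next
  fix A B assume A: "A \<in> L \<union> {T, T - {t}}" and B: "B \<subseteq> A" "B \<noteq> {}"
  then consider "A \<in> L" | "B \<subseteq> T" by blast
  then show "B \<in> L \<union> {T, T - {t}}"
  proof cases
    case 1
    then show ?thesis using L B unfolding chain_complex_def by blast
  next
    case 2
    then show ?thesis using faces[of B] B(2) by blast
  qed
qed

lemma cSd2horn_eq_xi_on:
  "cSd2horn n k W = xi_on (ordW n W) {Cs \<in> xi_car (ordW n W). last Cs \<noteq> {0..n} \<and> last Cs \<noteq> {0..n} - {k}}"
  by (simp add: cSd2horn_def xi_on_def xi_def)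

lemma horn_chain_image_in_complex:
  assumes L: "chain_complex P L" and h: "rel_injection h (ordW n W) P"
    and faces: "\<And>B. B \<subseteq> h ` {0..n} \<Longrightarrow> B \<noteq> {} \<Longrightarrow> B \<noteq> h ` {0..n} \<Longrightarrow>
                  B \<noteq> h ` {0..n} - {h k} \<Longrightarrow> B \<in> L"
    and k: "k \<le> n" and Cs: "Cs \<in> pcar (cSd2horn n k W)"
  shows "ximap h Cs \<in> xi_over P L"
proof -
  have Cs: "Cs \<in> xi_car (ordW n W)" "last Cs \<noteq> {0..n}" "last Cs \<noteq> {0..n} - {k}"
    using Cs by (auto simp: cSd2horn_eq_xi_on)
  have inj: "inj_on h {0..n}" using rel_injectionD(2)[OF h] by simp
  have last: "last Cs \<subseteq> {0..n}" "last Cs \<noteq> {}"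
    using xi_car_subset_pcar[OF Cs(1)] xi_car_nonempty[OF Cs(1)] xi_car_last_in[OF Cs(1)] by auto
  have "h ` last Cs \<noteq> h ` {0..n}"
    using inj_on_image_eq_iff[OF inj last(1) order_refl] Cs(2) by blast
  moreover have "h ` ({0..n} - {k}) = h ` {0..n} - {h k}"
    using inj k by (simp add: inj_on_image_set_diff)
  then have "h ` last Cs \<noteq> h ` {0..n} - {h k}"
    using inj_on_image_eq_iff[OF inj last(1) Diff_subset] Cs(3) by metis
  ultimately have "h ` last Cs \<in> L" using faces[of "h ` last Cs"] last by blast
  moreover have "B \<subseteq> h ` last Cs" "B \<noteq> {}" if "B \<in> set (ximap h Cs)" for B
    using that xi_car_subset_last[OF Cs(1)] xi_car_nonempty[OF Cs(1)] by (auto simp: set_ximap)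
  ultimately have "set (ximap h Cs) \<subseteq> L" using L unfolding chain_complex_def by blast
  then show ?thesis using ximap_in_xi_car[OF h Cs(1)] by (simp add: xi_over_def)
qed

lemma simplex_chain_pulls_back_to_horn:
  assumes h: "rel_embedding h (ordW n W) P" and k: "k \<le> n"
    and new: "h ` {0..n} \<notin> L" "h ` {0..n} - {h k} \<notin> L"
    and As: "As \<in> xi_over P L" "As \<in> xi_car (P\<lparr>pcar := h ` {0..n}\<rparr>)"
  shows "ximap (inv_into {0..n} h) As \<in> pcar (cSd2horn n k W)"
    and "ximap h (ximap (inv_into {0..n} h) As) = As"
proof -
  let ?hi = "inv_into {0..n} h"
  have hi: "rel_injection ?hi (P\<lparr>pcar := h ` {0..n}\<rparr>) (ordW n W)"
    using rel_embedding_inv_into[OF h] by simp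
  have TP: "h ` {0..n} \<subseteq> pcar P" using rel_embedding_image_subset[OF h] by simp
  have sub: "\<forall>A\<in>set As. A \<subseteq> h ` {0..n}" and "last As \<in> L"
    using As xi_car_last_in[of As P] unfolding xi_over_def xi_car_restrict[OF TP] by auto
  moreover have "h ` (?hi ` last As) = last As"
    using sub xi_car_last_in[OF As(2)] by (auto simp: image_inv_into_cancel)
  moreover have "h ` ({0..n} - {k}) = h ` {0..n} - {h k}"
    using rel_injectionD(2)[OF rel_embedding_injection[OF h]] k by (simp add: inj_on_image_set_diff)
  ultimately have "last (ximap ?hi As) \<noteq> {0..n}" "last (ximap ?hi As) \<noteq> {0..n} - {k}"
    using new last_ximap[OF hi As(2)] by auto
  then show "ximap ?hi As \<in> pcar (cSd2horn n k W)"
    using ximap_in_xi_car[OF hi As(2)] by (simp add: cSd2horn_eq_xi_on)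
  show "ximap h (ximap ?hi As) = As"
    using ximap_ximap_inv_into[of As P h "{0..n}"] As(1) sub by (simp add: xi_over_def)
qed

lemma functors_agree_horn_filler:
  assumes h: "rel_embedding h (ordW n W) P" and k: "k \<le> n"
    and new: "h ` {0..n} \<notin> L" "h ` {0..n} - {h k} \<notin> L"
    and F_horn: "\<forall>Cs\<in>pcar (cSd2horn n k W). fst F Cs = fst G (ximap h Cs)"
      "\<forall>Cs\<in>pcar (cSd2horn n k W). \<forall>Ds\<in>pcar (cSd2horn n k W).
         set Cs \<subseteq> set Ds \<longrightarrow> snd F Cs Ds = snd G (ximap h Cs) (ximap h Ds)"
  defines "C \<equiv> xi_car (P\<lparr>pcar := h ` {0..n}\<rparr>)"
  shows "functors_agree P (xi_over P L) G C (pullback_on C (inv_into {0..n} h) F)"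
  unfolding functors_agree_def
proof (intro ballI conjI impI)
  let ?hi = "inv_into {0..n} h" and ?Hc = "pcar (cSd2horn n k W)"
  have TP: "h ` {0..n} \<subseteq> pcar P" using rel_embedding_image_subset[OF h] by simp
  fix As assume As: "As \<in> xi_over P L \<inter> C"
  note rA = simplex_chain_pulls_back_to_horn[OF h k new, of As]
  show "fst G As = fst (pullback_on C ?hi F) As"
    using As rA F_horn(1) by (simp add: C_def pullback_on_simps)
  fix Bs assume Bs: "Bs \<in> xi_car P" "set Bs \<subseteq> set As"
  then have Bs': "Bs \<in> xi_over P L \<inter> C"
    using As unfolding C_def xi_over_def xi_car_restrict[OF TP] by auto
  note rB = simplex_chain_pulls_back_to_horn[OF h k new, of Bs]
  have "snd F (ximap ?hi Bs) (ximap ?hi As) = snd G Bs As"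
    using F_horn(2) rA rB As Bs' set_ximap_mono[OF Bs(2), of ?hi] by (simp add: C_def)
  then show "snd G Bs As = snd (pullback_on C ?hi F) Bs As"
    using As Bs' Bs(2) by (simp add: pullback_on_simps)
qed

lemma extend_over_horn:
  assumes P: "is_relposet P" and L: "chain_complex P L" and h: "chain_enum P h n" and k: "k \<le> n"
    and new: "h ` {0..n} \<notin> L" "h ` {0..n} - {h k} \<notin> L"
    and faces: "\<And>B. B \<subseteq> h ` {0..n} \<Longrightarrow> B \<noteq> {} \<Longrightarrow> B \<noteq> h ` {0..n} \<Longrightarrow>
                  B \<noteq> h ` {0..n} - {h k} \<Longrightarrow> B \<in> L"
    and ext: "horn_extension M n k (induced_relstruct P h n)"
    and G: "relfun (xi_on P (xi_over P L)) M G"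
  obtains G' where "relfun (xi_on P (xi_over P (L \<union> {h ` {0..n}, h ` {0..n} - {h k}}))) M G'"
    and "agrees_on (xi_over P L) G' G"
proof -
  define W where "W = induced_relstruct P h n"
  define Hc where "Hc = pcar (cSd2horn n k W)"
  define T where "T = h ` {0..n}"
  have O: "is_relposet (ordW n W)" by (rule is_relposet_ordW) (auto simp: W_def induced_relstruct_def)
  have he: "rel_embedding h (ordW n W) P" unfolding W_def by (rule rel_embedding_chain_enum[OF P h])
  note hinj = rel_embedding_injection[OF he]
  have TP: "T \<subseteq> pcar P" using rel_embedding_image_subset[OF he] by (simp add: T_def)
  have "relfun (xi_on (ordW n W) Hc) M (pullback_on Hc h G)"
    using horn_chain_image_in_complex[OF L hinj faces k]
    by (intro relfun_pullback_on[OF O P hinj _ _ G]) (auto simp: Hc_def cSd2horn_eq_xi_on)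
  then have "relfun (cSd2horn n k W) M (pullback_on Hc h G)"
    by (simp add: Hc_def cSd2horn_eq_xi_on)
  then obtain F where F: "relfun (xi (ordW n W)) M F"
    and F_horn: "\<forall>Cs\<in>Hc. fst F Cs = fst (pullback_on Hc h G) Cs"
      "\<forall>Cs\<in>Hc. \<forall>Ds\<in>Hc. ple (cSd2horn n k W) Cs Ds \<longrightarrow> snd F Cs Ds = snd (pullback_on Hc h G) Cs Ds"
    using ext unfolding horn_extension_def W_def[symmetric] Hc_def by blast
  have "\<forall>Cs\<in>Hc. fst F Cs = fst G (ximap h Cs)"
    "\<forall>Cs\<in>Hc. \<forall>Ds\<in>Hc. set Cs \<subseteq> set Ds \<longrightarrow> snd F Cs Ds = snd G (ximap h Cs) (ximap h Ds)"
    using F_horn by (simp_all add: pullback_on_simps cSd2horn_eq_xi_on)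
  note agree = functors_agree_horn_filler[OF he k new this[unfolded Hc_def]]
  have hi: "rel_injection (inv_into {0..n} h) (P\<lparr>pcar := T\<rparr>) (ordW n W)"
    using rel_embedding_inv_into[OF he] by (simp add: T_def)
  have "relfun (xi_on P (xi_car (P\<lparr>pcar := T\<rparr>))) M (pullback_on (xi_car (P\<lparr>pcar := T\<rparr>)) (inv_into {0..n} h) F)"
    using relfun_pullback_on[OF is_relposet_restrict[OF P TP] O hi order_refl
        ximap_in_xi_car[OF hi] F[unfolded xi_eq_xi_on]] by simp
  then obtain G' where "relfun (xi_on P (xi_over P L \<union> xi_car (P\<lparr>pcar := T\<rparr>))) M G'"
    "agrees_on (xi_over P L) G' G"
    using relfun_glue_two[OF xi_downclosed_xi_over xi_downclosed_xi_car_restrict[OF TP] G]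
      agree[folded T_def] by blast
  then show ?thesis
    using that xi_over_insert_simplex[OF L TP faces[folded T_def]] by (simp add: T_def)
qed

section \<open>Extension over all chains by adding horns in pairs\<close>

definition pair_closed :: "'p set set \<Rightarrow> ('p set \<Rightarrow> 'p) \<Rightarrow> 'p set set \<Rightarrow> bool" where
  "pair_closed Mi c L \<longleftrightarrow> (\<forall>T\<in>Mi. T \<in> L \<longleftrightarrow> insert (c T) T \<in> L)"

context
  fixes P :: "'p relposet" and Mi :: "'p set set" and c :: "'p set \<Rightarrow> 'p" and m :: "'p set \<Rightarrow> nat"
    and M :: "('o, 'm) relcat"
  assumes P: "is_relposet P" and fin: "finite (pcar P)"
    and Mi_chains: "Mi \<subseteq> Collect (fin_chain P)"
    and Mi_up: "\<And>A B. A \<in> Mi \<Longrightarrow> fin_chain P B \<Longrightarrow> A \<subseteq> B \<Longrightarrow> B \<in> Mi"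
    and pair: "\<And>T. T \<in> Mi \<Longrightarrow> insert (c T) T \<in> Mi \<and> T - {c T} \<in> Mi \<and>
                 c (insert (c T) T) = c T \<and> c (T - {c T}) = c T"
    and decreasing: "\<And>U y. U \<in> Mi \<Longrightarrow> c U \<in> U \<Longrightarrow> y \<in> U \<Longrightarrow> y \<noteq> c U \<Longrightarrow> U - {y} \<in> Mi \<Longrightarrow>
                 m (insert (c (U - {y})) (U - {y})) < m U"
    and horn: "\<And>U. U \<in> Mi \<Longrightarrow> c U \<in> U \<Longrightarrow> \<exists>h n k. chain_enum P h n \<and> k \<le> n \<and> U = h ` {0..n} \<and>
                 h k = c U \<and> horn_extension M n k (induced_relstruct P h n)"
begin

lemma missing_faces_of_minimal_pair:
  assumes L: "chain_complex P L" and comp: "Collect (fin_chain P) - Mi \<subseteq> L"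
    and U: "U \<in> Mi" "c U \<in> U"
    and min: "\<And>V. V \<in> Mi \<Longrightarrow> V \<notin> L \<Longrightarrow> m U \<le> m (insert (c V) V)"
    and B: "B \<subseteq> U" "B \<noteq> {}" "B \<noteq> U" "B \<noteq> U - {c U}"
  shows "B \<in> L"
proof -
  have "\<not> U - B \<subseteq> {c U}"
  proof
    assume "U - B \<subseteq> {c U}"
    then have "B = U \<or> B = U - {c U}" using B(1) by blast
    then show False using B(3,4) by blast
  qed
  then obtain y where y: "y \<in> U" "y \<notin> B" "y \<noteq> c U" by blast
  have "B \<subseteq> U - {y}" using B(1) y(2) by blast
  then have "fin_chain P (U - {y})"
    using fin_chain_subset[of P U "U - {y}"] B(2) U(1) Mi_chains by blast
  moreover have "U - {y} \<in> L" if "U - {y} \<in> Mi"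
  proof (rule ccontr)
    assume "U - {y} \<notin> L"
    then show False using min[OF that] decreasing[OF U y(1,3) that] by simp
  qed
  ultimately have "U - {y} \<in> L" using comp by blast
  then show ?thesis using L \<open>B \<subseteq> U - {y}\<close> B(2) unfolding chain_complex_def by blast
qed

lemma pair_closed_insert_pair:
  assumes pc: "pair_closed Mi c L" and U: "U \<in> Mi" "c U \<in> U"
  shows "pair_closed Mi c (L \<union> {U, U - {c U}})"
  unfolding pair_closed_def
proof (intro ballI)
  fix T assume T: "T \<in> Mi"
  have cT: "c (insert (c T) T) = c T" and cU: "c (U - {c U}) = c U" using pair T U(1) by auto
  have "T \<in> {U, U - {c U}} \<longleftrightarrow> insert (c T) T \<in> {U, U - {c U}}"
  proof
    assume "T \<in> {U, U - {c U}}"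
    then consider "T = U" | "T = U - {c U}" by blast
    then show "insert (c T) T \<in> {U, U - {c U}}"
      by cases (use U(2) cU in \<open>simp_all add: insert_absorb\<close>)
  next
    assume ins: "insert (c T) T \<in> {U, U - {c U}}"
    have "insert (c T) T \<noteq> U - {c U}"
    proof
      assume "insert (c T) T = U - {c U}"
      then show False using cT cU by (metis Diff_iff insertI1 singletonI)
    qed
    then have U_eq: "insert (c T) T = U" using ins by blast
    then have "c T = c U" using cT by simp
    show "T \<in> {U, U - {c U}}"
    proof (cases "c T \<in> T")
      case True
      then show ?thesis using U_eq by (simp add: insert_absorb)
    next
      case False
      then show ?thesis using U_eq \<open>c T = c U\<close> Diff_insert_absorb[of "c T" T] by simp
    qed
  qed
  then show "T \<in> L \<union> {U, U - {c U}} \<longleftrightarrow> insert (c T) T \<in> L \<union> {U, U - {c U}}"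
    using pc T unfolding pair_closed_def by blast
qed

lemma minimal_missing_pairE:
  assumes L: "chain_complex P L" and comp: "Collect (fin_chain P) - Mi \<subseteq> L" and pc: "pair_closed Mi c L"
    and missing: "\<not> Collect (fin_chain P) \<subseteq> L"
  obtains U where "U \<in> Mi" "c U \<in> U" "U - {c U} \<in> Mi" "U \<notin> L" "U - {c U} \<notin> L"
    and "\<And>B. B \<subseteq> U \<Longrightarrow> B \<noteq> {} \<Longrightarrow> B \<noteq> U \<Longrightarrow> B \<noteq> U - {c U} \<Longrightarrow> B \<in> L"
proof -
  define Ups where "Ups = {insert (c T) T | T. T \<in> Mi \<and> T \<notin> L}"
  obtain T0 where "T0 \<in> Mi" "T0 \<notin> L" using missing comp by blast
  then have "insert (c T0) T0 \<in> Ups" unfolding Ups_def by blast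
  then obtain U where "U \<in> Ups" and min_Ups: "\<And>V. V \<in> Ups \<Longrightarrow> m U \<le> m V"
    using ex_has_least_nat[of "\<lambda>V. V \<in> Ups" _ m] by blast
  then obtain T where T: "T \<in> Mi" "T \<notin> L" "U = insert (c T) T" unfolding Ups_def by blast
  have U: "U \<in> Mi" "c U \<in> U" "U - {c U} \<in> Mi" and cU: "c (U - {c U}) = c U"
    using pair[OF T(1)] pair[of U] T(3) by auto
  have "U \<notin> L" using pc T unfolding pair_closed_def by blast
  moreover have "U - {c U} \<notin> L"
    using pc U(3) cU U(2) \<open>U \<notin> L\<close> unfolding pair_closed_def by (simp add: insert_absorb)
  moreover have "B \<in> L" if "B \<subseteq> U" "B \<noteq> {}" "B \<noteq> U" "B \<noteq> U - {c U}" for B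
    using missing_faces_of_minimal_pair[OF L comp U(1,2) _ that] min_Ups unfolding Ups_def by blast
  ultimately show ?thesis using that U by blast
qed

lemma extend_from_pair_closed_complex:
  assumes "card (Collect (fin_chain P) - L) = N"
    and "chain_complex P L" "Collect (fin_chain P) - Mi \<subseteq> L" "pair_closed Mi c L"
    and "relfun (xi_on P (xi_over P L)) M G"
  shows "\<exists>F. relfun (xi P) M F \<and> agrees_on (xi_over P L) F G"
  using assms
proof (induction N arbitrary: L G rule: less_induct)
  case (less N)
  note L = less.prems(2) and comp = less.prems(3) and pc = less.prems(4) and G = less.prems(5)
  show ?case
  proof (cases "Collect (fin_chain P) \<subseteq> L")
    case True
    then have "L = Collect (fin_chain P)" using L unfolding chain_complex_def by blast
    then have "xi_over P L = xi_car P" by (simp add: xi_over_fin_chains)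
    then show ?thesis using G by (intro exI[of _ G]) (simp add: xi_eq_xi_on agrees_on_def)
  next
    case False
    then obtain U where U: "U \<in> Mi" "c U \<in> U" "U - {c U} \<in> Mi" "U \<notin> L" "U - {c U} \<notin> L"
      and faces: "\<And>B. B \<subseteq> U \<Longrightarrow> B \<noteq> {} \<Longrightarrow> B \<noteq> U \<Longrightarrow> B \<noteq> U - {c U} \<Longrightarrow> B \<in> L"
      using minimal_missing_pairE[OF L comp pc] by blast
    obtain h n k where h: "chain_enum P h n" "k \<le> n" "U = h ` {0..n}" "h k = c U"
      and ext: "horn_extension M n k (induced_relstruct P h n)"
      using horn[OF U(1,2)] by blast
    define L' where "L' = L \<union> {U, U - {c U}}"
    obtain G' where G': "relfun (xi_on P (xi_over P L')) M G'" "agrees_on (xi_over P L) G' G"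
      using extend_over_horn[OF P L h(1,2) _ _ _ ext G] U(4,5) faces
      unfolding L'_def h(3,4)[symmetric] by blast
    have "chain_complex P L'"
      unfolding L'_def using chain_complex_insert_simplex[OF L _ _ faces] U Mi_chains by blast
    moreover have "pair_closed Mi c L'" unfolding L'_def by (rule pair_closed_insert_pair[OF pc U(1,2)])
    moreover have "Collect (fin_chain P) - Mi \<subseteq> L'" using comp by (auto simp: L'_def)
    moreover have "card (Collect (fin_chain P) - L') < N"
      unfolding less.prems(1)[symmetric] L'_def
      using finite_fin_chains[OF fin] U(1,4) Mi_chains by (intro psubset_card_mono) auto
    ultimately obtain F where "relfun (xi P) M F" "agrees_on (xi_over P L') F G'"
      using less.IH[OF _ refl _ _ _ G'(1)] by blast
    moreover have "xi_over P L \<subseteq> xi_over P L'" by (auto simp: xi_over_def L'_def)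
    ultimately show ?thesis using G'(2) by (blast intro: agrees_on_trans agrees_on_subset)
  qed
qed

lemma extend_from_complement:
  assumes "relfun (xi_on P (xi_over P (Collect (fin_chain P) - Mi))) M G"
  shows "\<exists>F. relfun (xi P) M F \<and> agrees_on (xi_over P (Collect (fin_chain P) - Mi)) F G"
proof (rule extend_from_pair_closed_complex[OF refl _ order_refl _ assms])
  show "chain_complex P (Collect (fin_chain P) - Mi)"
    unfolding chain_complex_def using Mi_up fin_chain_subset by blast
  show "pair_closed Mi c (Collect (fin_chain P) - Mi)"
    unfolding pair_closed_def using pair by auto
qed

end

section \<open>Chains of [p] x [n] outside the horn and their pivots\<close>

lemma prodpos_simps [simp]:
  "pcar (prodpos p q) = {0..p} \<times> {0..q}"
  "ple (prodpos p q) x y \<longleftrightarrow> fst x \<le> fst y \<and> snd x \<le> snd y"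
  "pweq (prodpos p q) x y \<longleftrightarrow> fst x = fst y \<and> snd x \<le> snd y"
  by (simp_all add: prodpos_def case_prod_beta)

lemma is_relposet_prodpos: "is_relposet (prodpos p q)"
  unfolding is_relposet_def by (auto simp: prod_eq_iff)

lemma fin_chain_prodpos:
  "fin_chain (prodpos p q) A \<longleftrightarrow> A \<noteq> {} \<and> finite A \<and> A \<subseteq> {0..p} \<times> {0..q} \<and>
     (\<forall>x\<in>A. \<forall>y\<in>A. (fst x \<le> fst y \<and> snd x \<le> snd y) \<or> (fst y \<le> fst x \<and> snd y \<le> snd x))"
  by (simp add: fin_chain_def)

text \<open>A chain of the product order is also sorted lexicographically, so listing it in increasing
  lexicographic order enumerates it as a chain.\<close>

lemma chain_enum_prodpos:
  assumes A: "fin_chain (prodpos p q) A"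
  defines "h \<equiv> \<lambda>i. sorted_list_of_set A ! i"
  shows "chain_enum (prodpos p q) h (card A - 1)" and "A = h ` {0..card A - 1}"
proof -
  define xs where "xs = sorted_list_of_set A"
  have fin: "finite A" and ne: "A \<noteq> {}" and sub: "A \<subseteq> {0..p} \<times> {0..q}"
    and tot: "\<forall>x\<in>A. \<forall>y\<in>A. (fst x \<le> fst y \<and> snd x \<le> snd y) \<or> (fst y \<le> fst x \<and> snd y \<le> snd x)"
    using A unfolding fin_chain_prodpos by auto
  have set: "set xs = A" and len: "length xs = card A" and sw: "sorted_wrt (<) xs"
    using fin by (simp_all add: xs_def)
  have pos: "card A > 0" using fin ne by (simp add: card_gt_0_iff)
  then have idx: "{0..card A - 1} = {0..<length xs}" using len by auto
  have "h ` {0..card A - 1} = set xs"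
    unfolding h_def xs_def[symmetric] idx by (simp add: nth_image)
  then show "A = h ` {0..card A - 1}" using set by simp
  show "chain_enum (prodpos p q) h (card A - 1)"
    unfolding chain_enum_def h_def xs_def[symmetric]
  proof (intro conjI allI impI)
    fix i assume "i \<le> card A - 1"
    then have "i < length xs" using len pos by linarith
    then show "xs ! i \<in> pcar (prodpos p q)" using set sub nth_mem by fastforce
  next
    fix i j assume ij: "i < j" "j \<le> card A - 1"
    then have jl: "j < length xs" using len pos by linarith
    then have lt: "xs ! i < xs ! j" and mem: "xs ! i \<in> A" "xs ! j \<in> A"
      using sorted_wrt_nth_less[OF sw ij(1)] ij(1) set nth_mem by auto
    then have "\<not> (fst (xs ! j) \<le> fst (xs ! i) \<and> snd (xs ! j) \<le> snd (xs ! i))"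
      by (auto simp: less_eq_prod_def less_prod_def)
    then show "ple (prodpos p q) (xs ! i) (xs ! j)" using tot mem by auto
    show "xs ! i \<noteq> xs ! j" using lt by simp
  qed
qed

lemma chain_enum_prodpos_adjacent:
  assumes h: "chain_enum (prodpos p q) h N" and ij: "i \<le> N" "j \<le> N"
    and same: "fst (h i) = fst (h j)" and succ: "snd (h j) = Suc (snd (h i))"
  shows "j = Suc i"
proof -
  note le = chain_enum_le[OF is_relposet_prodpos h]
  have "i < j" using le[OF ij] le[OF ij(2,1)] same succ by auto
  moreover have False if "Suc i < j"
  proof -
    have "ple (prodpos p q) (h i) (h (Suc i))" "ple (prodpos p q) (h (Suc i)) (h j)"
      "h i \<noteq> h (Suc i)" "h (Suc i) \<noteq> h j"
      using h that ij unfolding chain_enum_def by auto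
    then show False using same succ by (auto simp: prod_eq_iff)
  qed
  ultimately show ?thesis using Suc_lessI by blast
qed

definition horns_extend :: "('o, 'm) relcat \<Rightarrow> bool" where
  "horns_extend M \<longleftrightarrow> (\<forall>n k W. 1 \<le> n \<longrightarrow> k \<le> n \<longrightarrow> relstruct n W \<longrightarrow>
     (\<exists>(i, j)\<in>W. i \<noteq> j) \<longrightarrow> (k = 0 \<longrightarrow> (0, 1) \<in> W) \<longrightarrow> (k = n \<longrightarrow> (n - 1, n) \<in> W) \<longrightarrow>
     horn_extension M n k W)"

lemma horn_extension_adjacent_weq:
  assumes H: "horns_extend M" and h: "chain_enum (prodpos p q) h N" and k: "k \<le> N"
    and j: "Suc j \<le> N" "fst (h j) = fst (h (Suc j))"
    and "k = 0 \<Longrightarrow> j = 0" and "k = N \<Longrightarrow> Suc j = N"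
  shows "horn_extension M N k (induced_relstruct (prodpos p q) h N)"
proof -
  let ?W = "induced_relstruct (prodpos p q) h N"
  have "(j, Suc j) \<in> ?W"
    using chain_enum_le[OF is_relposet_prodpos h, of j "Suc j"] j
    by (auto simp: induced_relstruct_def)
  moreover have "relstruct N ?W"
    unfolding relstruct_def induced_relstruct_def trans_def by auto
  ultimately show ?thesis
    using H[unfolded horns_extend_def, rule_format, OF _ k] j assms(6,7) by fastforce
qed

text \<open>The chains of [p] x [n] contained in no face of the horn.\<close>

definition outside_horn :: "nat \<Rightarrow> nat \<Rightarrow> nat \<Rightarrow> (nat \<times> nat) set set" where
  "outside_horn p n k = {A. fin_chain (prodpos p n) A \<and> {0..p} \<subseteq> fst ` A \<and> {0..n} - {k} \<subseteq> snd ` A}"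

lemma outside_horn_fin_chains: "outside_horn p n k \<subseteq> Collect (fin_chain (prodpos p n))"
  unfolding outside_horn_def by auto

lemma outside_horn_up:
  "A \<in> outside_horn p n k \<Longrightarrow> fin_chain (prodpos p n) B \<Longrightarrow> A \<subseteq> B \<Longrightarrow> B \<in> outside_horn p n k"
  unfolding outside_horn_def by (blast dest: image_mono)

lemma outside_horn_insert:
  assumes A: "A \<in> outside_horn p n k" and x: "x \<in> {0..p} \<times> {0..n}"
    and comp: "\<forall>y\<in>A. (fst x \<le> fst y \<and> snd x \<le> snd y) \<or> (fst y \<le> fst x \<and> snd y \<le> snd x)"
  shows "insert x A \<in> outside_horn p n k"
proof (rule outside_horn_up[OF A _ subset_insertI])
  show "fin_chain (prodpos p n) (insert x A)"
    using A x comp unfolding outside_horn_def fin_chain_prodpos by auto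
qed

lemma outside_horn_remove:
  assumes A: "A \<in> outside_horn p n k" and x: "snd x = k" and r: "(fst x, r) \<in> A" "r \<noteq> k"
  shows "A - {x} \<in> outside_horn p n k"
proof -
  have rx: "(fst x, r) \<in> A - {x}" using r x by (auto simp: prod_eq_iff)
  have A': "fin_chain (prodpos p n) A" "{0..p} \<subseteq> fst ` A" "{0..n} - {k} \<subseteq> snd ` A"
    using A by (simp_all add: outside_horn_def)
  have "fst ` A \<subseteq> fst ` (A - {x})"
  proof
    fix a assume "a \<in> fst ` A"
    then obtain z where z: "z \<in> A" "a = fst z" by blast
    show "a \<in> fst ` (A - {x})"
    proof (cases "z = x")
      case True
      then show ?thesis using rx z by (metis fst_conv rev_image_eqI)
    qed (use z in blast)
  qed
  moreover have "snd ` A - {k} \<subseteq> snd ` (A - {x})"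
  proof
    fix b assume "b \<in> snd ` A - {k}"
    then obtain z where "z \<in> A" "b = snd z" "b \<noteq> k" by blast
    then show "b \<in> snd ` (A - {x})" using x by blast
  qed
  moreover have "fin_chain (prodpos p n) (A - {x})"
    using fin_chain_subset[OF A'(1), of "A - {x}"] rx by blast
  ultimately show ?thesis using A' unfolding outside_horn_def by blast
qed

definition row :: "(nat \<times> nat) set \<Rightarrow> nat \<Rightarrow> nat set" where
  "row A r = {a. (a, r) \<in> A}"

lemma row_insert_other [simp]: "r \<noteq> k \<Longrightarrow> row (insert (a, k) A) r = row A r"
  and row_remove_other [simp]: "r \<noteq> k \<Longrightarrow> row (A - {(a, k)}) r = row A r"
  by (auto simp: row_def)

lemma row_outside_horn:
  assumes A: "A \<in> outside_horn p n k" and r: "r \<le> n" "r \<noteq> k"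
  shows "finite (row A r)" "row A r \<noteq> {}" "row A r \<subseteq> {0..p}"
proof -
  have c: "fin_chain (prodpos p n) A" "r \<in> snd ` A" using A r unfolding outside_horn_def by auto
  have "row A r \<subseteq> fst ` A" by (force simp: row_def)
  then show "finite (row A r)" using c(1) by (auto simp: fin_chain_def intro: finite_subset)
  show "row A r \<noteq> {}" using c(2) by (force simp: row_def)
  show "row A r \<subseteq> {0..p}" using c(1) by (auto simp: row_def fin_chain_prodpos)
qed

text \<open>Since w takes values at most p, card A * (p + 1) + w A orders sets lexicographically by
  (card A, w A).\<close>

lemma lex_measure_decreasing:
  fixes w :: "'a set \<Rightarrow> nat" and c :: "'a set \<Rightarrow> 'a" and U :: "'a set" and y :: 'a
  defines "V \<equiv> U - {y}"
  assumes U: "finite U" "y \<in> U" "c U \<in> U" "y \<noteq> c U"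
    and w: "w V \<le> w U" "w V = w U \<Longrightarrow> c V = c U" "w U \<le> p" "w (insert (c V) V) = w V"
  shows "card (insert (c V) V) * (p + 1) + w (insert (c V) V) < card U * (p + 1) + w U"
proof -
  have "card U > 0" using U(1,2) card_gt_0_iff by blast
  then have card: "card V + 1 = card U" using U by (simp add: V_def card_Diff_singleton)
  show ?thesis
  proof (cases "c V = c U")
    case True
    then have "insert (c V) V = V" using U by (auto simp: V_def)
    then show ?thesis using w(1) unfolding card[symmetric] by (simp add: algebra_simps)
  next
    case False
    then have "w V < w U" using w(1,2) by fastforce
    moreover have "finite V" using U(1) by (simp add: V_def)
    then have "card (insert (c V) V) \<le> card U" using card card_insert_if[of V "c V"] by auto
    then have "card (insert (c V) V) * (p + 1) \<le> card U * (p + 1)" by (rule mult_le_mono1)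
    ultimately show ?thesis using w(4) by linarith
  qed
qed

definition pivot_below :: "nat \<Rightarrow> (nat \<times> nat) set \<Rightarrow> nat \<times> nat" where
  "pivot_below k A = (Min (row A (Suc k)), k)"

lemma pivot_below_props:
  assumes A: "A \<in> outside_horn p n k" and k: "k < n"
  shows "(Min (row A (Suc k)), Suc k) \<in> A" and "\<And>a. (a, Suc k) \<in> A \<Longrightarrow> Min (row A (Suc k)) \<le> a"
    and "pivot_below k A \<in> {0..p} \<times> {0..n}"
  using row_outside_horn[OF A, of "Suc k"] k Min_in[of "row A (Suc k)"] Min_le[of "row A (Suc k)"]
  by (auto simp: row_def pivot_below_def)

lemma outside_horn_comparable:
  assumes "A \<in> outside_horn p n k" "x \<in> A" "y \<in> A"
  shows "(fst x \<le> fst y \<and> snd x \<le> snd y) \<or> (fst y \<le> fst x \<and> snd y \<le> snd x)"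
  using assms unfolding outside_horn_def fin_chain_prodpos by blast

lemma pivot_below_comparable:
  assumes A: "A \<in> outside_horn p n k" and k: "k < n" and y: "y \<in> A"
  shows "(fst y \<le> Min (row A (Suc k)) \<and> snd y \<le> k) \<or> (Min (row A (Suc k)) \<le> fst y \<and> k \<le> snd y)"
proof -
  note z = pivot_below_props[OF A k]
  have "(fst y \<le> Min (row A (Suc k)) \<and> snd y \<le> Suc k) \<or> (Min (row A (Suc k)) \<le> fst y \<and> Suc k \<le> snd y)"
    using outside_horn_comparable[OF A y z(1)] by simp
  moreover have "Min (row A (Suc k)) \<le> fst y" if "snd y = Suc k"
    using z(2)[of "fst y"] y that by (metis prod.collapse)
  ultimately show ?thesis by (cases "snd y = Suc k") auto
qed

lemma pivot_below_pairs:
  assumes A: "A \<in> outside_horn p n k" and k: "k < n"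
  shows "insert (pivot_below k A) A \<in> outside_horn p n k \<and> A - {pivot_below k A} \<in> outside_horn p n k \<and>
    pivot_below k (insert (pivot_below k A) A) = pivot_below k A \<and>
    pivot_below k (A - {pivot_below k A}) = pivot_below k A"
proof (intro conjI)
  show "insert (pivot_below k A) A \<in> outside_horn p n k"
    using pivot_below_comparable[OF A k] pivot_below_props[OF A k]
    by (intro outside_horn_insert[OF A]) (auto simp: pivot_below_def)
  show "A - {pivot_below k A} \<in> outside_horn p n k"
    using pivot_below_props(1)[OF A k] by (intro outside_horn_remove[OF A]) (auto simp: pivot_below_def)
qed (simp_all add: pivot_below_def)

lemma pivot_below_decreasing:
  fixes U :: "(nat \<times> nat) set" and y :: "nat \<times> nat" and p k :: nat
  defines "m \<equiv> \<lambda>A. card A * (p + 1) + (p - Min (row A (Suc k)))" and "V \<equiv> U - {y}"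
  assumes U: "U \<in> outside_horn p n k" "pivot_below k U \<in> U" and k: "k < n"
    and y: "y \<in> U" "y \<noteq> pivot_below k U" and V: "V \<in> outside_horn p n k"
  shows "m (insert (pivot_below k V) V) < m U"
proof -
  have rows: "finite (row U (Suc k))" "row V (Suc k) \<noteq> {}" "row V (Suc k) \<subseteq> row U (Suc k)"
    "Min (row V (Suc k)) \<le> p" "Min (row U (Suc k)) \<le> p"
    using row_outside_horn[OF U(1), of "Suc k"] row_outside_horn[OF V, of "Suc k"] k
      pivot_below_props(3)[OF U(1) k] pivot_below_props(3)[OF V k]
    by (auto simp: V_def row_def pivot_below_def)
  have "Min (row U (Suc k)) \<le> Min (row V (Suc k))" using Min_antimono[OF rows(3,2,1)] .
  moreover have "finite U" using U(1) by (simp add: outside_horn_def fin_chain_def)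
  ultimately show ?thesis
    unfolding m_def V_def using rows(4,5)
    by (intro lex_measure_decreasing[where c = "pivot_below k", OF _ y(1) U(2) y(2)])
       (auto simp: V_def pivot_below_def)
qed

lemma pivot_below_horn:
  assumes H: "horns_extend M" and U: "U \<in> outside_horn p n k" "pivot_below k U \<in> U" and k: "k < n"
  shows "\<exists>h N k'. chain_enum (prodpos p n) h N \<and> k' \<le> N \<and> U = h ` {0..N} \<and> h k' = pivot_below k U \<and>
    horn_extension M N k' (induced_relstruct (prodpos p n) h N)"
proof -
  define h where "h = (\<lambda>i. sorted_list_of_set U ! i)"
  define N where "N = card U - 1"
  have U_chain: "fin_chain (prodpos p n) U" using U(1) by (simp add: outside_horn_def)
  have h_enum: "chain_enum (prodpos p n) h N" and U_eq: "U = h ` {0..N}"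
    using chain_enum_prodpos[OF U_chain] by (simp_all add: h_def N_def)
  obtain k' where k': "k' \<le> N" "h k' = pivot_below k U" using U(2) U_eq by auto
  obtain j where j: "j \<le> N" "h j = (Min (row U (Suc k)), Suc k)"
    using pivot_below_props(1)[OF U(1) k] U_eq by auto
  have "j = Suc k'"
    using chain_enum_prodpos_adjacent[OF h_enum k'(1) j(1)] j(2) k'(2) by (simp add: pivot_below_def)
  then have "horn_extension M N k' (induced_relstruct (prodpos p n) h N)"
    using j k' by (intro horn_extension_adjacent_weq[OF H h_enum k'(1), where j = k'])
      (auto simp: pivot_below_def)
  then show ?thesis using h_enum k' U_eq by blast
qed

definition pivot_above :: "nat \<Rightarrow> (nat \<times> nat) set \<Rightarrow> nat \<times> nat" where
  "pivot_above n A = (Max (row A (n - 1)), n)"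

lemma pivot_above_props:
  assumes A: "A \<in> outside_horn p n n" and n: "1 \<le> n"
  shows "(Max (row A (n - 1)), n - 1) \<in> A" and "\<And>a. (a, n - 1) \<in> A \<Longrightarrow> a \<le> Max (row A (n - 1))"
    and "pivot_above n A \<in> {0..p} \<times> {0..n}"
proof -
  have "n - 1 \<le> n" "n - 1 \<noteq> n" using n by auto
  note rows = row_outside_horn[OF A this]
  show "(Max (row A (n - 1)), n - 1) \<in> A" "\<And>a. (a, n - 1) \<in> A \<Longrightarrow> a \<le> Max (row A (n - 1))"
    "pivot_above n A \<in> {0..p} \<times> {0..n}"
    using Max_in[OF rows(1,2)] Max_ge[OF rows(1)] rows(3) by (auto simp: row_def pivot_above_def)
qed

lemma pivot_above_comparable:
  assumes A: "A \<in> outside_horn p n n" and n: "1 \<le> n" and y: "y \<in> A"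
  shows "(fst y \<le> Max (row A (n - 1)) \<and> snd y \<le> n) \<or> (Max (row A (n - 1)) \<le> fst y \<and> n \<le> snd y)"
proof -
  note z = pivot_above_props[OF A n]
  have "(fst y \<le> Max (row A (n - 1)) \<and> snd y \<le> n - 1) \<or> (Max (row A (n - 1)) \<le> fst y \<and> n - 1 \<le> snd y)"
    using outside_horn_comparable[OF A y z(1)] by simp
  moreover have "snd y \<le> n" using A y by (auto simp: outside_horn_def fin_chain_prodpos)
  moreover have "fst y \<le> Max (row A (n - 1))" if "snd y = n - 1"
    using z(2)[of "fst y"] y that by (metis prod.collapse)
  ultimately show ?thesis by (cases "snd y = n - 1") auto
qed

lemma pivot_above_pairs:
  assumes A: "A \<in> outside_horn p n n" and n: "1 \<le> n"
  shows "insert (pivot_above n A) A \<in> outside_horn p n n \<and> A - {pivot_above n A} \<in> outside_horn p n n \<and>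
    pivot_above n (insert (pivot_above n A) A) = pivot_above n A \<and>
    pivot_above n (A - {pivot_above n A}) = pivot_above n A"
proof (intro conjI)
  show "insert (pivot_above n A) A \<in> outside_horn p n n"
    using pivot_above_comparable[OF A n] pivot_above_props[OF A n]
    by (intro outside_horn_insert[OF A]) (auto simp: pivot_above_def)
  show "A - {pivot_above n A} \<in> outside_horn p n n"
    using pivot_above_props(1)[OF A n] n
    by (intro outside_horn_remove[OF A]) (auto simp: pivot_above_def)
qed (use n in \<open>simp_all add: pivot_above_def\<close>)

lemma pivot_above_decreasing:
  fixes U :: "(nat \<times> nat) set" and y :: "nat \<times> nat" and p n :: nat
  defines "m \<equiv> \<lambda>A. card A * (p + 1) + Max (row A (n - 1))" and "V \<equiv> U - {y}"
  assumes U: "U \<in> outside_horn p n n" "pivot_above n U \<in> U" and n: "1 \<le> n"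
    and y: "y \<in> U" "y \<noteq> pivot_above n U" and V: "V \<in> outside_horn p n n"
  shows "m (insert (pivot_above n V) V) < m U"
proof -
  have rows: "finite (row U (n - 1))" "row V (n - 1) \<noteq> {}" "row V (n - 1) \<subseteq> row U (n - 1)"
    "Max (row U (n - 1)) \<le> p"
    using row_outside_horn[OF U(1), of "n - 1"] row_outside_horn[OF V, of "n - 1"] n
      pivot_above_props(3)[OF U(1) n]
    by (auto simp: V_def row_def pivot_above_def)
  have "Max (row V (n - 1)) \<le> Max (row U (n - 1))" using Max_mono[OF rows(3,2,1)] .
  moreover have "finite U" using U(1) by (simp add: outside_horn_def fin_chain_def)
  ultimately show ?thesis
    unfolding m_def V_def using rows(4) n
    by (intro lex_measure_decreasing[where c = "pivot_above n", OF _ y(1) U(2) y(2)])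
       (auto simp: V_def pivot_above_def)
qed

lemma pivot_above_horn:
  assumes H: "horns_extend M" and U: "U \<in> outside_horn p n n" "pivot_above n U \<in> U" and n: "1 \<le> n"
  shows "\<exists>h N k'. chain_enum (prodpos p n) h N \<and> k' \<le> N \<and> U = h ` {0..N} \<and> h k' = pivot_above n U \<and>
    horn_extension M N k' (induced_relstruct (prodpos p n) h N)"
proof -
  define h where "h = (\<lambda>i. sorted_list_of_set U ! i)"
  define N where "N = card U - 1"
  have U_chain: "fin_chain (prodpos p n) U" using U(1) by (simp add: outside_horn_def)
  have h_enum: "chain_enum (prodpos p n) h N" and U_eq: "U = h ` {0..N}"
    using chain_enum_prodpos[OF U_chain] by (simp_all add: h_def N_def)
  obtain k' where k': "k' \<le> N" "h k' = pivot_above n U" using U(2) U_eq by auto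
  obtain j where j: "j \<le> N" "h j = (Max (row U (n - 1)), n - 1)"
    using pivot_above_props(1)[OF U(1) n] U_eq by auto
  have "k' = Suc j"
    using chain_enum_prodpos_adjacent[OF h_enum j(1) k'(1)] j(2) k'(2) n by (simp add: pivot_above_def)
  then have "horn_extension M N k' (induced_relstruct (prodpos p n) h N)"
    using j k' by (intro horn_extension_adjacent_weq[OF H h_enum k'(1), where j = j])
      (auto simp: pivot_above_def)
  then show ?thesis using h_enum k' U_eq by blast
qed

lemma extend_outside_horn:
  assumes H: "horns_extend M" and n: "1 \<le> n" and k: "k \<le> n"
    and G: "relfun (xi_on (prodpos p n)
              (xi_over (prodpos p n) (Collect (fin_chain (prodpos p n)) - outside_horn p n k))) M G"
  shows "\<exists>F. relfun (xi (prodpos p n)) M F \<and>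
    agrees_on (xi_over (prodpos p n) (Collect (fin_chain (prodpos p n)) - outside_horn p n k)) F G"
proof (cases "k < n")
  case True
  show ?thesis
    by (rule extend_from_complement[where c = "pivot_below k"
          and m = "\<lambda>A. card A * (p + 1) + (p - Min (row A (Suc k)))"])
      (use G True pivot_below_pairs pivot_below_decreasing pivot_below_horn[OF H] in
        \<open>simp_all add: is_relposet_prodpos outside_horn_fin_chains outside_horn_up\<close>)
next
  case False
  then have k: "k = n" using k by simp
  show ?thesis
    unfolding k
    by (rule extend_from_complement[where c = "pivot_above n"
          and m = "\<lambda>A. card A * (p + 1) + Max (row A (n - 1))"])
      (use G n k pivot_above_pairs pivot_above_decreasing pivot_above_horn[OF H] in
        \<open>simp_all add: is_relposet_prodpos outside_horn_fin_chains outside_horn_up\<close>)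
qed

section \<open>Pushing relative functors forward along embeddings\<close>

lemma rel_embedding_comp:
  assumes e: "rel_embedding e Q P1" and g: "rel_embedding g P1 P"
  shows "rel_embedding (g \<circ> e) Q P"
proof -
  note eD = rel_injectionD[OF rel_embedding_injection[OF e]]
  note gD = rel_injectionD[OF rel_embedding_injection[OF g]]
  have "inj_on (g \<circ> e) (pcar Q)"
    using eD(1) by (intro comp_inj_on eD(2) inj_on_subset[OF gD(2)]) blast
  moreover have "ple Q x y" if "x \<in> pcar Q" "y \<in> pcar Q" "ple P (g (e x)) (g (e y))" for x y
    using e g that eD(1) unfolding rel_embedding_def by blast
  moreover have "pweq Q x y" if "x \<in> pcar Q" "y \<in> pcar Q" "pweq P (g (e x)) (g (e y))" for x y
    using e g that eD(1) unfolding rel_embedding_def by blast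
  ultimately show ?thesis
    unfolding rel_embedding_def rel_injection_def using eD gD by simp
qed

definition image_chains :: "'b relposet \<Rightarrow> ('a \<Rightarrow> 'b) \<Rightarrow> 'a relposet \<Rightarrow> 'b set list set" where
  "image_chains P g D = xi_car (P\<lparr>pcar := g ` pcar D\<rparr>)"

definition pushforward where
  "pushforward P g D d = pullback_on (image_chains P g D) (inv_into (pcar D) g) d"

lemma image_chains_eq:
  "rel_embedding g D P \<Longrightarrow> image_chains P g D = {As \<in> xi_car P. \<forall>A\<in>set As. A \<subseteq> g ` pcar D}"
  unfolding image_chains_def by (rule xi_car_restrict[OF rel_embedding_image_subset])

lemma xi_downclosed_image_chains: "rel_embedding g D P \<Longrightarrow> xi_downclosed P (image_chains P g D)"
  unfolding image_chains_def by (rule xi_downclosed_xi_car_restrict[OF rel_embedding_image_subset])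

lemma relfun_pushforward:
  assumes "is_relposet P" "is_relposet D" and g: "rel_embedding g D P" and d: "relfun (xi D) M d"
  shows "relfun (xi_on P (image_chains P g D)) M (pushforward P g D d)"
proof -
  note gi = rel_embedding_inv_into[OF g]
  have "relfun (xi_on (P\<lparr>pcar := g ` pcar D\<rparr>) (image_chains P g D)) M (pushforward P g D d)"
    unfolding pushforward_def image_chains_def
    by (rule relfun_pullback_on[OF is_relposet_restrict[OF assms(1) rel_embedding_image_subset[OF g]]
          assms(2) gi order_refl ximap_in_xi_car[OF gi] d[unfolded xi_eq_xi_on]])
  then show ?thesis by simp
qed

lemma image_chains_disjoint:
  assumes "rel_embedding g1 P1 P" "rel_embedding g2 P2 P" "g1 ` pcar P1 \<inter> g2 ` pcar P2 = {}"
  shows "image_chains P g1 P1 \<inter> image_chains P g2 P2 = {}"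
proof (rule ccontr)
  assume "image_chains P g1 P1 \<inter> image_chains P g2 P2 \<noteq> {}"
  then obtain As where As: "As \<in> xi_car P" "\<forall>A\<in>set As. A \<subseteq> g1 ` pcar P1 \<and> A \<subseteq> g2 ` pcar P2"
    by (auto simp: image_chains_eq[OF assms(1)] image_chains_eq[OF assms(2)]) blast
  then obtain z where "z \<in> hd As" using xi_car_nonempty[OF As(1) xi_car_hd_in[OF As(1)]] by blast
  then show False using As(2) xi_car_hd_in[OF As(1)] assms(3) by blast
qed

lemma ximap_inv_into_comp:
  assumes g: "rel_embedding g P1 P" and e: "rel_injection e Q P1" and Cs: "Cs \<in> xi_car Q"
  shows "ximap (inv_into (pcar P1) g) (ximap (g \<circ> e) Cs) = ximap e Cs"
proof -
  have "inj_on g (pcar P1)" using g by (simp add: rel_embedding_def rel_injection_def)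
  then show ?thesis
    unfolding ximap_comp using xi_car_subset_pcar[OF Cs] rel_injectionD(1)[OF e]
    by (intro ximap_cong) (auto simp: inv_into_f_f subset_iff)
qed

lemma pullback_pushforward:
  assumes g: "rel_embedding g D P" and d: "relfun (xi D) M d"
    and F: "agrees_on (image_chains P g D) F (pushforward P g D d)"
  shows "pullback D g F = d"
proof -
  have img: "ximap g Cs \<in> image_chains P g D" if "Cs \<in> xi_car D" for Cs
    using ximap_in_xi_car[OF rel_embedding_injection[OF g] that] xi_car_subset_pcar[OF that]
    by (auto simp: image_chains_eq[OF g] set_ximap)
  have rt: "ximap (inv_into (pcar D) g) (ximap g Cs) = Cs" if "Cs \<in> xi_car D" for Cs
    by (rule ximap_inv_into_ximap[OF g that])
  note dD = relfunD[OF d, simplified]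
  show ?thesis
  proof (rule prod_eqI; intro ext)
    show "fst (pullback D g F) Cs = fst d Cs" for Cs
      using F img rt dD(6)[of Cs]
      by (cases "Cs \<in> xi_car D") (simp_all add: agrees_on_def pushforward_def pullback_on_simps
          pullback_eq_pullback_on)
    show "snd (pullback D g F) Bs Cs = snd d Bs Cs" for Bs Cs
      using F img rt set_ximap_mono[of Bs Cs g] relfunD(7)[OF d, of Bs Cs]
      by (cases "Bs \<in> xi_car D \<and> Cs \<in> xi_car D \<and> set Bs \<subseteq> set Cs")
         (auto simp: agrees_on_def pushforward_def pullback_on_simps pullback_eq_pullback_on)
  qed
qed

lemma functors_agree_pushforward:
  assumes g1: "rel_embedding g1 P1 P" and g2: "rel_embedding g2 P2 P"
    and e1: "rel_embedding e1 Q P1" and e2: "rel_embedding e2 Q P2"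
    and comm: "\<And>q. q \<in> pcar Q \<Longrightarrow> g1 (e1 q) = g2 (e2 q)"
    and cover: "g1 ` pcar P1 \<inter> g2 ` pcar P2 \<subseteq> (g1 \<circ> e1) ` pcar Q"
    and square: "pullback Q e1 d1 = pullback Q e2 d2"
  shows "functors_agree P (image_chains P g1 P1) (pushforward P g1 P1 d1)
           (image_chains P g2 P2) (pushforward P g2 P2 d2)"
proof -
  define f where "f = g1 \<circ> e1"
  define fi where "fi = inv_into (pcar Q) f"
  have f: "rel_embedding f Q P" unfolding f_def by (rule rel_embedding_comp[OF e1 g1])
  have f2: "ximap (g2 \<circ> e2) Cs = ximap f Cs" if "Cs \<in> xi_car Q" for Cs
    using comm xi_car_subset_pcar[OF that] by (intro ximap_cong) (force simp: f_def)
  have factor: "fi_As \<in> xi_car Q \<and> ximap (inv_into (pcar P1) g1) As = ximap e1 fi_As \<and>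
      ximap (inv_into (pcar P2) g2) As = ximap e2 fi_As"
    if As: "As \<in> image_chains P g1 P1 \<inter> image_chains P g2 P2" and "fi_As = ximap fi As" for As fi_As
  proof -
    have As_P: "As \<in> xi_car P" and "\<forall>A\<in>set As. A \<subseteq> g1 ` pcar P1 \<inter> g2 ` pcar P2"
      using As by (auto simp: image_chains_eq[OF g1] image_chains_eq[OF g2])
    then have "\<forall>A\<in>set As. A \<subseteq> f ` pcar Q" using cover unfolding f_def by blast
    then have Cs: "fi_As \<in> xi_car Q" and As_eq: "ximap f fi_As = As"
      using As_P ximap_in_xi_car[OF rel_embedding_inv_into[OF f]] ximap_ximap_inv_into[OF As_P]
      by (auto simp: that(2) fi_def xi_car_restrict rel_embedding_image_subset[OF f])
    show ?thesis
      using Cs ximap_inv_into_comp[OF g1 rel_embedding_injection[OF e1] Cs]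
        ximap_inv_into_comp[OF g2 rel_embedding_injection[OF e2] Cs]
      unfolding f2[OF Cs] using As_eq by (simp add: f_def)
  qed
  show ?thesis
    unfolding functors_agree_def
  proof (intro ballI conjI impI)
    fix As assume As: "As \<in> image_chains P g1 P1 \<inter> image_chains P g2 P2"
    note A = factor[OF As refl]
    show "fst (pushforward P g1 P1 d1) As = fst (pushforward P g2 P2 d2) As"
      using As A fun_cong[OF arg_cong[where f = fst, OF square], of "ximap fi As"]
      by (simp add: pushforward_def pullback_on_simps pullback_eq_pullback_on)
    fix Bs assume Bs: "Bs \<in> xi_car P" "set Bs \<subseteq> set As"
    then have BsC: "Bs \<in> image_chains P g1 P1 \<inter> image_chains P g2 P2"
      using As by (auto simp: image_chains_eq[OF g1] image_chains_eq[OF g2])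
    note B = factor[OF this refl]
    show "snd (pushforward P g1 P1 d1) Bs As = snd (pushforward P g2 P2 d2) Bs As"
      using As A BsC B Bs(2) set_ximap_mono[OF Bs(2), of fi]
        fun_cong[OF fun_cong[OF arg_cong[where f = snd, OF square]], of "ximap fi Bs" "ximap fi As"]
      by (simp add: pushforward_def pullback_on_simps pullback_eq_pullback_on)
  qed
qed

section \<open>Cofaces of [p] x [q] and horn fillers in N_xi M\<close>

lemma delta_le_delta_iff [simp]: "delta i a \<le> delta i b \<longleftrightarrow> a \<le> b"
  and delta_eq_delta_iff [simp]: "delta i a = delta i b \<longleftrightarrow> a = b"
  and delta_neq: "delta i a \<noteq> i"
  and delta_le_Suc: "delta i a \<le> Suc a"
  by (auto simp: delta_def)

lemma delta_surj: "b \<le> m \<Longrightarrow> b \<noteq> i \<Longrightarrow> i \<le> m \<Longrightarrow> \<exists>a\<le>m - 1. delta i a = b"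
proof (cases "b < i")
  case False
  moreover assume "b \<le> m" "b \<noteq> i"
  ultimately show ?thesis by (intro exI[of _ "b - 1"]) (auto simp: delta_def)
next
  case True
  moreover assume "i \<le> m"
  ultimately show ?thesis by (intro exI[of _ b]) (auto simp: delta_def)
qed

lemma delta_delta: "i < j \<Longrightarrow> delta j (delta i b) = delta i (delta (j - 1) b)"
  and delta_below: "i < j \<Longrightarrow> delta j i = i"
  by (auto simp: delta_def)

definition vcoface :: "nat \<Rightarrow> nat \<times> nat \<Rightarrow> nat \<times> nat" where
  "vcoface i = (\<lambda>(a, b). (a, delta i b))"

definition hcoface :: "nat \<Rightarrow> nat \<times> nat \<Rightarrow> nat \<times> nat" where
  "hcoface i = (\<lambda>(a, b). (delta i a, b))"

lemma vcoface_simp [simp]: "vcoface i z = (fst z, delta i (snd z))"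
  and hcoface_simp [simp]: "hcoface i z = (delta i (fst z), snd z)"
  by (simp_all add: vcoface_def hcoface_def case_prod_beta)

lemma vface_eq_pullback: "vface p q i F = pullback (prodpos p (q - 1)) (vcoface i) F"
  by (simp add: vface_def vcoface_def)

lemma hface_eq_pullback: "hface p q i F = pullback (prodpos (p - 1) q) (hcoface i) F"
  by (simp add: hface_def hcoface_def)

lemma delta_le_bound: "1 \<le> q \<Longrightarrow> b \<le> q - 1 \<Longrightarrow> delta i b \<le> q"
  using delta_le_Suc[of i b] by linarith

lemma rel_embedding_vcoface: "1 \<le> q \<Longrightarrow> rel_embedding (vcoface i) (prodpos p (q - 1)) (prodpos p q)"
  unfolding rel_embedding_def rel_injection_def inj_on_def by (auto simp: prod_eq_iff delta_le_bound)

lemma rel_embedding_hcoface: "1 \<le> p \<Longrightarrow> rel_embedding (hcoface i) (prodpos (p - 1) q) (prodpos p q)"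
  unfolding rel_embedding_def rel_injection_def inj_on_def by (auto simp: prod_eq_iff delta_le_bound)

lemma vcoface_image:
  assumes "1 \<le> q" "i \<le> q"
  shows "vcoface i ` pcar (prodpos p (q - 1)) = {z \<in> pcar (prodpos p q). snd z \<noteq> i}"
proof (intro equalityI subsetI)
  fix z assume "z \<in> vcoface i ` pcar (prodpos p (q - 1))"
  then show "z \<in> {z \<in> pcar (prodpos p q). snd z \<noteq> i}"
    using rel_embedding_image_subset[OF rel_embedding_vcoface[OF assms(1)]] delta_neq by fastforce
next
  fix z assume z: "z \<in> {z \<in> pcar (prodpos p q). snd z \<noteq> i}"
  then obtain b where "b \<le> q - 1" "delta i b = snd z" using delta_surj[of "snd z" q i] assms(2) by auto
  then have "(fst z, b) \<in> pcar (prodpos p (q - 1))" "z = vcoface i (fst z, b)" using z by auto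
  then show "z \<in> vcoface i ` pcar (prodpos p (q - 1))" by blast
qed

lemma hcoface_image:
  assumes "1 \<le> p" "i \<le> p"
  shows "hcoface i ` pcar (prodpos (p - 1) q) = {z \<in> pcar (prodpos p q). fst z \<noteq> i}"
proof (intro equalityI subsetI)
  fix z assume "z \<in> hcoface i ` pcar (prodpos (p - 1) q)"
  then show "z \<in> {z \<in> pcar (prodpos p q). fst z \<noteq> i}"
    using rel_embedding_image_subset[OF rel_embedding_hcoface[OF assms(1)]] delta_neq by fastforce
next
  fix z assume z: "z \<in> {z \<in> pcar (prodpos p q). fst z \<noteq> i}"
  then obtain a where "a \<le> p - 1" "delta i a = fst z" using delta_surj[of "fst z" p i] assms(2) by auto
  then have "(a, snd z) \<in> pcar (prodpos (p - 1) q)" "z = hcoface i (a, snd z)" using z by auto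
  then show "z \<in> hcoface i ` pcar (prodpos (p - 1) q)" by blast
qed

text \<open>The horn of [p] x [n] is the union of the faces [p] x d_i[n] (i \<noteq> k), encoded as Vert i,
  and d_j[p] x [n], encoded as Horiz j.\<close>

datatype face = Vert nat | Horiz nat

fun face_dom :: "nat \<Rightarrow> nat \<Rightarrow> face \<Rightarrow> (nat \<times> nat) relposet" where
  "face_dom p n (Vert i) = prodpos p (n - 1)"
| "face_dom p n (Horiz j) = prodpos (p - 1) n"

fun face_map :: "face \<Rightarrow> nat \<times> nat \<Rightarrow> nat \<times> nat" where
  "face_map (Vert i) = vcoface i"
| "face_map (Horiz j) = hcoface j"

definition horn_faces :: "nat \<Rightarrow> nat \<Rightarrow> nat \<Rightarrow> face set" where
  "horn_faces p n k = {Vert i | i. i \<le> n \<and> i \<noteq> k} \<union> {Horiz j | j. 1 \<le> p \<and> j \<le> p}"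

definition face_chains :: "nat \<Rightarrow> nat \<Rightarrow> face \<Rightarrow> (nat \<times> nat) set list set" where
  "face_chains p n c = image_chains (prodpos p n) (face_map c) (face_dom p n c)"

definition face_functor where
  "face_functor p n c d = pushforward (prodpos p n) (face_map c) (face_dom p n c) d"

lemma rel_embedding_face_map:
  assumes "1 \<le> n" "c \<in> horn_faces p n k"
  shows "rel_embedding (face_map c) (face_dom p n c) (prodpos p n)"
  using assms rel_embedding_vcoface[OF assms(1)] rel_embedding_hcoface
  by (cases c) (auto simp: horn_faces_def)

lemma agree_vert_vert:
  assumes ij: "i < j" "j \<le> n" and n: "2 \<le> n"
    and compat: "vface p (n - 1) i Fj = vface p (n - 1) (j - 1) Fi"
  shows "functors_agree (prodpos p n) (face_chains p n (Vert j)) (face_functor p n (Vert j) Fj)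
           (face_chains p n (Vert i)) (face_functor p n (Vert i) Fi)"
  unfolding face_chains_def face_functor_def face_dom.simps face_map.simps
proof (rule functors_agree_pushforward)
  have n1: "1 \<le> n" "1 \<le> n - 1" using n by auto
  show "rel_embedding (vcoface j) (prodpos p (n - 1)) (prodpos p n)"
    "rel_embedding (vcoface i) (prodpos p (n - 1)) (prodpos p n)"
    "rel_embedding (vcoface i) (prodpos p (n - 1 - 1)) (prodpos p (n - 1))"
    "rel_embedding (vcoface (j - 1)) (prodpos p (n - 1 - 1)) (prodpos p (n - 1))"
    using n1 by (blast intro: rel_embedding_vcoface)+
  show "vcoface j (vcoface i q) = vcoface i (vcoface (j - 1) q)" for q
    using delta_delta[OF ij(1)] by simp
  show "vcoface j ` pcar (prodpos p (n - 1)) \<inter> vcoface i ` pcar (prodpos p (n - 1))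
      \<subseteq> (vcoface j \<circ> vcoface i) ` pcar (prodpos p (n - 1 - 1))"
  proof
    fix z assume z: "z \<in> vcoface j ` pcar (prodpos p (n - 1)) \<inter> vcoface i ` pcar (prodpos p (n - 1))"
    then obtain w where w: "w \<in> pcar (prodpos p (n - 1))" "z = vcoface j w" by blast
    have "snd w \<noteq> i" using z w delta_below[OF ij(1)] vcoface_image[OF n1(1), of i p] ij by auto
    then have "w \<in> vcoface i ` pcar (prodpos p (n - 1 - 1))"
      using w(1) vcoface_image[OF n1(2), of i p] ij by auto
    then show "z \<in> (vcoface j \<circ> vcoface i) ` pcar (prodpos p (n - 1 - 1))"
      unfolding image_comp[symmetric] using w(2) by blast
  qed
  show "pullback (prodpos p (n - 1 - 1)) (vcoface i) Fj = pullback (prodpos p (n - 1 - 1)) (vcoface (j - 1)) Fi"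
    using compat by (simp add: vface_eq_pullback)
qed

lemma agree_horiz_horiz:
  assumes ij: "i < j" "j \<le> p"
    and compat: "2 \<le> p \<Longrightarrow> hface (p - 1) n i Gj = hface (p - 1) n (j - 1) Gi"
  shows "functors_agree (prodpos p n) (face_chains p n (Horiz j)) (face_functor p n (Horiz j) Gj)
           (face_chains p n (Horiz i)) (face_functor p n (Horiz i) Gi)"
proof (cases "2 \<le> p")
  case True
  have p1: "1 \<le> p" "1 \<le> p - 1" using True by auto
  show ?thesis
    unfolding face_chains_def face_functor_def face_dom.simps face_map.simps
  proof (rule functors_agree_pushforward)
    show "rel_embedding (hcoface j) (prodpos (p - 1) n) (prodpos p n)"
      "rel_embedding (hcoface i) (prodpos (p - 1) n) (prodpos p n)"
      "rel_embedding (hcoface i) (prodpos (p - 1 - 1) n) (prodpos (p - 1) n)"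
      "rel_embedding (hcoface (j - 1)) (prodpos (p - 1 - 1) n) (prodpos (p - 1) n)"
      using p1 by (blast intro: rel_embedding_hcoface)+
    show "hcoface j (hcoface i q) = hcoface i (hcoface (j - 1) q)" for q
      using delta_delta[OF ij(1)] by simp
    show "hcoface j ` pcar (prodpos (p - 1) n) \<inter> hcoface i ` pcar (prodpos (p - 1) n)
        \<subseteq> (hcoface j \<circ> hcoface i) ` pcar (prodpos (p - 1 - 1) n)"
    proof
      fix z assume z: "z \<in> hcoface j ` pcar (prodpos (p - 1) n) \<inter> hcoface i ` pcar (prodpos (p - 1) n)"
      then obtain w where w: "w \<in> pcar (prodpos (p - 1) n)" "z = hcoface j w" by blast
      have "fst w \<noteq> i" using z w delta_below[OF ij(1)] hcoface_image[OF p1(1), of i n] ij by auto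
      then have "w \<in> hcoface i ` pcar (prodpos (p - 1 - 1) n)"
        using w(1) hcoface_image[OF p1(2), of i n] ij by auto
      then show "z \<in> (hcoface j \<circ> hcoface i) ` pcar (prodpos (p - 1 - 1) n)"
      unfolding image_comp[symmetric] using w(2) by blast
    qed
    show "pullback (prodpos (p - 1 - 1) n) (hcoface i) Gj = pullback (prodpos (p - 1 - 1) n) (hcoface (j - 1)) Gi"
      using compat True by (simp add: hface_eq_pullback)
  qed
next
  case False
  then have "i = 0" "j = 1" "p = 1" using ij by auto
  then have "hcoface j ` pcar (prodpos (p - 1) n) \<inter> hcoface i ` pcar (prodpos (p - 1) n) = {}"
    using hcoface_image[of p j n] hcoface_image[of p i n] by auto
  then show ?thesis
    unfolding face_chains_def face_map.simps face_dom.simps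
    using \<open>p = 1\<close> rel_embedding_hcoface[of p]
    by (intro functors_agree_disjoint image_chains_disjoint) auto
qed

lemma agree_vert_horiz:
  assumes i: "i \<le> n" and j: "j \<le> p" and n: "1 \<le> n" and p: "1 \<le> p"
    and compat: "hface p (n - 1) j F = vface (p - 1) n i G"
  shows "functors_agree (prodpos p n) (face_chains p n (Vert i)) (face_functor p n (Vert i) F)
           (face_chains p n (Horiz j)) (face_functor p n (Horiz j) G)"
  unfolding face_chains_def face_functor_def face_dom.simps face_map.simps
proof (rule functors_agree_pushforward)
  show "rel_embedding (vcoface i) (prodpos p (n - 1)) (prodpos p n)"
    "rel_embedding (hcoface j) (prodpos (p - 1) n) (prodpos p n)"
    "rel_embedding (hcoface j) (prodpos (p - 1) (n - 1)) (prodpos p (n - 1))"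
    "rel_embedding (vcoface i) (prodpos (p - 1) (n - 1)) (prodpos (p - 1) n)"
    using n p by (blast intro: rel_embedding_vcoface rel_embedding_hcoface)+
  show "vcoface i (hcoface j q) = hcoface j (vcoface i q)" for q by simp
  show "vcoface i ` pcar (prodpos p (n - 1)) \<inter> hcoface j ` pcar (prodpos (p - 1) n)
      \<subseteq> (vcoface i \<circ> hcoface j) ` pcar (prodpos (p - 1) (n - 1))"
  proof
    fix z assume z: "z \<in> vcoface i ` pcar (prodpos p (n - 1)) \<inter> hcoface j ` pcar (prodpos (p - 1) n)"
    then obtain w where w: "w \<in> pcar (prodpos p (n - 1))" "z = vcoface i w" by blast
    have "fst w \<noteq> j" using z w hcoface_image[OF p j, of n] by auto
    then have "w \<in> hcoface j ` pcar (prodpos (p - 1) (n - 1))"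
      using w(1) hcoface_image[OF p j, of "n - 1"] by auto
    then show "z \<in> (vcoface i \<circ> hcoface j) ` pcar (prodpos (p - 1) (n - 1))"
      unfolding image_comp[symmetric] using w(2) by blast
  qed
  show "pullback (prodpos (p - 1) (n - 1)) (hcoface j) F = pullback (prodpos (p - 1) (n - 1)) (vcoface i) G"
    using compat by (simp add: vface_eq_pullback hface_eq_pullback)
qed

fun face_data :: "(nat \<Rightarrow> 'a) \<Rightarrow> (nat \<Rightarrow> 'a) \<Rightarrow> face \<Rightarrow> 'a" where
  "face_data x y (Vert i) = x i"
| "face_data x y (Horiz j) = y j"

lemma horn_face_functors_agree:
  assumes k: "k \<le> n" and n: "1 \<le> n"
    and xx: "\<And>i j. 2 \<le> n \<Longrightarrow> i < j \<Longrightarrow> j \<le> n \<Longrightarrow> i \<noteq> k \<Longrightarrow> j \<noteq> k \<Longrightarrow>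
               vface p (n - 1) i (x j) = vface p (n - 1) (j - 1) (x i)"
    and yy: "\<And>i j. 2 \<le> p \<Longrightarrow> i < j \<Longrightarrow> j \<le> p \<Longrightarrow> hface (p - 1) n i (y j) = hface (p - 1) n (j - 1) (y i)"
    and xy: "\<And>i j. 1 \<le> p \<Longrightarrow> i \<le> n \<Longrightarrow> i \<noteq> k \<Longrightarrow> j \<le> p \<Longrightarrow>
               hface p (n - 1) j (x i) = vface (p - 1) n i (y j)"
    and c: "c \<in> horn_faces p n k" and c': "c' \<in> horn_faces p n k"
  shows "functors_agree (prodpos p n) (face_chains p n c) (face_functor p n c (face_data x y c))
           (face_chains p n c') (face_functor p n c' (face_data x y c'))"
proof -
  let ?agree = "\<lambda>c c'. functors_agree (prodpos p n) (face_chains p n c) (face_functor p n c (face_data x y c))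
    (face_chains p n c') (face_functor p n c' (face_data x y c'))"
  have sym: "?agree c c' \<Longrightarrow> ?agree c' c" for c c' by (rule functors_agree_sym)
  have vv: "?agree (Vert j) (Vert i)" if "i < j" "j \<le> n" "i \<noteq> k" "j \<noteq> k" for i j
    unfolding face_data.simps using that k by (intro agree_vert_vert xx) auto
  have hh: "?agree (Horiz j) (Horiz i)" if "i < j" "j \<le> p" for i j
    unfolding face_data.simps using that by (intro agree_horiz_horiz yy) auto
  have vh: "?agree (Vert i) (Horiz j)" if "i \<le> n" "i \<noteq> k" "j \<le> p" "1 \<le> p" for i j
    unfolding face_data.simps using that n by (intro agree_vert_horiz xy) auto
  show ?thesis
  proof (cases "c = c'")
    case False
    with c c' consider
        i j where "c = Vert i" "c' = Vert j" "i \<noteq> j" "i \<le> n" "j \<le> n" "i \<noteq> k" "j \<noteq> k"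
      | i j where "c = Horiz i" "c' = Horiz j" "i \<noteq> j" "i \<le> p" "j \<le> p"
      | i j where "c = Vert i" "c' = Horiz j" "i \<le> n" "i \<noteq> k" "j \<le> p" "1 \<le> p"
      | i j where "c = Horiz j" "c' = Vert i" "i \<le> n" "i \<noteq> k" "j \<le> p" "1 \<le> p"
      by (cases c; cases c') (auto simp: horn_faces_def)
    then show ?thesis
    proof cases
      case (1 i j)
      then show ?thesis using sym[OF vv[of i j]] vv[of j i] by (cases "i < j") auto
    next
      case (2 i j)
      then show ?thesis using sym[OF hh[of i j]] hh[of j i] by (cases "i < j") auto
    next
      case (3 i j)
      then show ?thesis using vh by simp
    next
      case (4 i j)
      then show ?thesis using sym[OF vh] by simp
    qed
  qed (simp add: functors_agree_refl)
qed

lemma face_chains_eq: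
  assumes n: "1 \<le> n" and c: "c \<in> horn_faces p n k"
  shows "face_chains p n c = {As \<in> xi_car (prodpos p n). \<forall>A\<in>set As. A \<subseteq> pcar (prodpos p n) \<and>
     (case c of Vert i \<Rightarrow> i \<notin> snd ` A | Horiz j \<Rightarrow> j \<notin> fst ` A)}"
proof -
  have "face_map c ` pcar (face_dom p n c) = {z \<in> pcar (prodpos p n).
      (case c of Vert i \<Rightarrow> snd z \<noteq> i | Horiz j \<Rightarrow> fst z \<noteq> j)}"
    using c vcoface_image[OF n] hcoface_image[of p _ n] by (cases c) (auto simp: horn_faces_def)
  then show ?thesis
    unfolding face_chains_def image_chains_eq[OF rel_embedding_face_map[OF n c]]
    by (cases c) auto
qed

lemma face_chains_avoid_outside_horn:
  assumes n: "1 \<le> n" and c: "c \<in> horn_faces p n k" and As: "As \<in> face_chains p n c"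
  shows "As \<in> xi_over (prodpos p n) (Collect (fin_chain (prodpos p n)) - outside_horn p n k)"
proof -
  have "A \<notin> outside_horn p n k" if A: "A \<in> set As" for A
  proof (cases c)
    case (Vert i)
    then have "i \<notin> snd ` A" "i \<le> n" "i \<noteq> k"
      using c A As face_chains_eq[OF n c] by (auto simp: horn_faces_def)
    then show ?thesis by (auto simp: outside_horn_def)
  next
    case (Horiz j)
    then have "j \<notin> fst ` A" "j \<le> p"
      using c A As face_chains_eq[OF n c] by (auto simp: horn_faces_def)
    then show ?thesis by (auto simp: outside_horn_def)
  qed
  then show ?thesis
    using As face_chains_eq[OF n c] xi_car_fin_chain by (auto simp: xi_over_def)
qed

lemma in_some_horn_faceE:
  assumes n: "1 \<le> n" and k: "k \<le> n"
    and "As \<in> xi_over (prodpos p n) (Collect (fin_chain (prodpos p n)) - outside_horn p n k)"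
  obtains c where "c \<in> horn_faces p n k" and "As \<in> face_chains p n c"
proof -
  have As: "As \<in> xi_car (prodpos p n)" "last As \<notin> outside_horn p n k"
    using assms(3) xi_car_last_in by (auto simp: xi_over_def)
  have L: "fin_chain (prodpos p n) (last As)"
    using xi_car_fin_chain[OF As(1) xi_car_last_in[OF As(1)]] .
  have last: "A \<subseteq> last As" if "A \<in> set As" for A using xi_car_subset_last[OF As(1) that] .
  have sub: "A \<subseteq> pcar (prodpos p n)" if "A \<in> set As" for A
    using that xi_car_subset_pcar[OF As(1)] by blast
  from As(2) L have "\<not> {0..p} \<subseteq> fst ` last As \<or> \<not> {0..n} - {k} \<subseteq> snd ` last As"
    by (simp add: outside_horn_def)
  then consider j where "j \<le> p" "j \<notin> fst ` last As" | i where "i \<le> n" "i \<noteq> k" "i \<notin> snd ` last As"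
    by fastforce
  then show ?thesis
  proof cases
    case (1 j)
    have "1 \<le> p"
    proof (rule ccontr)
      assume "\<not> 1 \<le> p"
      obtain z where z: "z \<in> last As"
        using xi_car_nonempty[OF As(1) xi_car_last_in[OF As(1)]] by blast
      then have "fst z = j" using L 1(1) \<open>\<not> 1 \<le> p\<close> by (auto simp: fin_chain_def)
      then show False using 1(2) z by blast
    qed
    then have face: "Horiz j \<in> horn_faces p n k" using 1 by (simp add: horn_faces_def)
    have "j \<notin> fst ` A" if "A \<in> set As" for A using 1(2) last[OF that] by blast
    then have "As \<in> face_chains p n (Horiz j)"
      using As(1) sub by (simp add: face_chains_eq[OF n face])
    with face show ?thesis by (rule that)
  next
    case (2 i)
    then have face: "Vert i \<in> horn_faces p n k" by (simp add: horn_faces_def)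
    have "i \<notin> snd ` A" if "A \<in> set As" for A using 2(3) last[OF that] by blast
    then have "As \<in> face_chains p n (Vert i)"
      using As(1) sub by (simp add: face_chains_eq[OF n face])
    with face show ?thesis by (rule that)
  qed
qed

lemma horn_faces_cover:
  assumes n: "1 \<le> n" and k: "k \<le> n"
  shows "(\<Union>c\<in>horn_faces p n k. face_chains p n c) =
    xi_over (prodpos p n) (Collect (fin_chain (prodpos p n)) - outside_horn p n k)"
proof
  show "(\<Union>c\<in>horn_faces p n k. face_chains p n c) \<subseteq>
      xi_over (prodpos p n) (Collect (fin_chain (prodpos p n)) - outside_horn p n k)"
    using face_chains_avoid_outside_horn[OF n] by blast
  show "xi_over (prodpos p n) (Collect (fin_chain (prodpos p n)) - outside_horn p n k) \<subseteq>
      (\<Union>c\<in>horn_faces p n k. face_chains p n c)"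
  proof
    fix As assume "As \<in> xi_over (prodpos p n) (Collect (fin_chain (prodpos p n)) - outside_horn p n k)"
    then obtain c where "c \<in> horn_faces p n k" "As \<in> face_chains p n c"
      by (rule in_some_horn_faceE[OF n k])
    then show "As \<in> (\<Union>c\<in>horn_faces p n k. face_chains p n c)" by blast
  qed
qed

lemma Nxi_horn_filler:
  assumes H: "horns_extend M" and n: "1 \<le> n" and k: "k \<le> n"
    and x: "\<And>i. i \<le> n \<Longrightarrow> i \<noteq> k \<Longrightarrow> relfun (xi (prodpos p (n - 1))) M (x i)"
    and y: "\<And>j. 1 \<le> p \<Longrightarrow> j \<le> p \<Longrightarrow> relfun (xi (prodpos (p - 1) n)) M (y j)"
    and xx: "\<And>i j. 2 \<le> n \<Longrightarrow> i < j \<Longrightarrow> j \<le> n \<Longrightarrow> i \<noteq> k \<Longrightarrow> j \<noteq> k \<Longrightarrow>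
               vface p (n - 1) i (x j) = vface p (n - 1) (j - 1) (x i)"
    and yy: "\<And>i j. 2 \<le> p \<Longrightarrow> i < j \<Longrightarrow> j \<le> p \<Longrightarrow> hface (p - 1) n i (y j) = hface (p - 1) n (j - 1) (y i)"
    and xy: "\<And>i j. 1 \<le> p \<Longrightarrow> i \<le> n \<Longrightarrow> i \<noteq> k \<Longrightarrow> j \<le> p \<Longrightarrow>
               hface p (n - 1) j (x i) = vface (p - 1) n i (y j)"
  shows "\<exists>z. relfun (xi (prodpos p n)) M z \<and> (\<forall>i\<le>n. i \<noteq> k \<longrightarrow> vface p n i z = x i) \<and>
    (1 \<le> p \<longrightarrow> (\<forall>j\<le>p. hface p n j z = y j))"
proof -
  let ?P = "prodpos p n" and ?I = "horn_faces p n k"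
  let ?G = "\<lambda>c. face_functor p n c (face_data x y c)"
  have data: "relfun (xi (face_dom p n c)) M (face_data x y c)" if "c \<in> ?I" for c
    using that x y by (cases c) (auto simp: horn_faces_def)
  have "is_relposet (face_dom p n c)" for c by (cases c) (simp_all add: is_relposet_prodpos)
  then have G: "\<forall>c\<in>?I. relfun (xi_on ?P (face_chains p n c)) M (?G c)"
    using relfun_pushforward[OF is_relposet_prodpos _ rel_embedding_face_map[OF n] data]
    by (simp add: face_chains_def face_functor_def)
  have down: "\<forall>c\<in>?I. xi_downclosed ?P (face_chains p n c)"
    using xi_downclosed_image_chains[OF rel_embedding_face_map[OF n]] by (simp add: face_chains_def)
  have agree: "\<forall>c\<in>?I. \<forall>c'\<in>?I. functors_agree ?P (face_chains p n c) (?G c) (face_chains p n c') (?G c')"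
    using horn_face_functors_agree[OF k n xx yy xy] by blast
  have "relfun (xi_on ?P (xi_over ?P (Collect (fin_chain ?P) - outside_horn p n k))) M
      (glue ?I (face_chains p n) ?G)"
    using relfun_glue[OF down G agree] unfolding horn_faces_cover[OF n k] .
  then obtain F where F: "relfun (xi ?P) M F"
    and F_glue: "agrees_on (\<Union>c\<in>?I. face_chains p n c) F (glue ?I (face_chains p n) ?G)"
    unfolding horn_faces_cover[OF n k] using extend_outside_horn[OF H n k] by blast
  have faces: "pullback (face_dom p n c) (face_map c) F = face_data x y c" if c: "c \<in> ?I" for c
  proof (rule pullback_pushforward[OF rel_embedding_face_map[OF n c] data[OF c]])
    show "agrees_on (image_chains ?P (face_map c) (face_dom p n c)) F
        (pushforward ?P (face_map c) (face_dom p n c) (face_data x y c))"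
      using agrees_on_trans[OF agrees_on_subset[OF F_glue] glue_agrees_on[OF down G agree c]] c
      by (auto simp: face_chains_def face_functor_def)
  qed
  have "vface p n i F = x i" if "i \<le> n" "i \<noteq> k" for i
    using faces[of "Vert i"] that by (simp add: horn_faces_def vface_eq_pullback)
  moreover have "hface p n j F = y j" if "1 \<le> p" "j \<le> p" for j
    using faces[of "Horiz j"] that by (simp add: horn_faces_def hface_eq_pullback)
  ultimately show ?thesis using F by blast
qed

section \<open>Reedy fibrancy of N_xi M\<close>

lemma kan_fibration_Nxi_0:
  assumes H: "horns_extend M"
  shows "kan_fibration (Nxi M 0) (vface 0) (\<lambda>_. (UNIV :: unit set)) (\<lambda>_ _ _. ()) (\<lambda>_ _. ())"
  unfolding kan_fibration_def
proof (intro allI impI)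
  fix n k x and y :: unit
  assume n: "1 \<le> n" and k: "k \<le> n"
    and x: "\<forall>i\<le>n. i \<noteq> k \<longrightarrow> x i \<in> Nxi M 0 (n - 1)"
    and xx: "\<forall>i j. 2 \<le> n \<longrightarrow> i < j \<longrightarrow> j \<le> n \<longrightarrow> i \<noteq> k \<longrightarrow> j \<noteq> k \<longrightarrow>
               vface 0 (n - 1) i (x j) = vface 0 (n - 1) (j - 1) (x i)"
  have "\<exists>z. relfun (xi (prodpos 0 n)) M z \<and> (\<forall>i\<le>n. i \<noteq> k \<longrightarrow> vface 0 n i z = x i) \<and>
      (1 \<le> (0::nat) \<longrightarrow> (\<forall>j\<le>0. hface 0 n j z = undefined))"
    by (rule Nxi_horn_filler[OF H n k]) (use x xx in \<open>simp_all add: Nxi_def\<close>)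
  then show "\<exists>z\<in>Nxi M 0 n. () = y \<and> (\<forall>i\<le>n. i \<noteq> k \<longrightarrow> vface 0 n i z = x i)"
    by (simp add: Nxi_def)
qed

lemma kan_fibration_Nxi_matching:
  assumes H: "horns_extend M" and p: "1 \<le> p"
  shows "kan_fibration (Nxi M p) (vface p) (match_obj M p) (match_face p) (match_map p)"
  unfolding kan_fibration_def
proof (intro allI impI)
  fix n k y x
  assume n: "1 \<le> n" and k: "k \<le> n" and y: "y \<in> match_obj M p n"
    and x: "\<forall>i\<le>n. i \<noteq> k \<longrightarrow> x i \<in> Nxi M p (n - 1)"
    and xx: "\<forall>i j. 2 \<le> n \<longrightarrow> i < j \<longrightarrow> j \<le> n \<longrightarrow> i \<noteq> k \<longrightarrow> j \<noteq> k \<longrightarrow>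
               vface p (n - 1) i (x j) = vface p (n - 1) (j - 1) (x i)"
    and xy: "\<forall>i\<le>n. i \<noteq> k \<longrightarrow> match_map p (n - 1) (x i) = match_face p n i y"
  have y': "\<forall>j\<le>p. y j \<in> Nxi M (p - 1) n" "\<forall>j>p. y j = undefined"
    "2 \<le> p \<longrightarrow> (\<forall>i j. i < j \<longrightarrow> j \<le> p \<longrightarrow> hface (p - 1) n i (y j) = hface (p - 1) n (j - 1) (y i))"
    using y by (simp_all add: match_obj_def)
  have "hface p (n - 1) j (x i) = vface (p - 1) n i (y j)" if "i \<le> n" "i \<noteq> k" "j \<le> p" for i j
    using fun_cong[OF xy[rule_format, OF that(1,2)], of j] that(3)
    by (simp add: match_map_def match_face_def)
  then have "\<exists>z. relfun (xi (prodpos p n)) M z \<and> (\<forall>i\<le>n. i \<noteq> k \<longrightarrow> vface p n i z = x i) \<and>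
      (1 \<le> p \<longrightarrow> (\<forall>j\<le>p. hface p n j z = y j))"
    by (intro Nxi_horn_filler[OF H n k]) (use x xx y' in \<open>simp_all add: Nxi_def\<close>)
  then obtain z where z: "z \<in> Nxi M p n" "\<forall>i\<le>n. i \<noteq> k \<longrightarrow> vface p n i z = x i"
    "\<forall>j\<le>p. hface p n j z = y j"
    using p by (auto simp: Nxi_def)
  moreover have "match_map p n z = y"
    using z(3) y'(2) by (auto simp: match_map_def)
  ultimately show "\<exists>z\<in>Nxi M p n. match_map p n z = y \<and> (\<forall>i\<le>n. i \<noteq> k \<longrightarrow> vface p n i z = x i)"
    by blast
qed

theorem lemma5p2:
  fixes M :: "('o, 'm) relcat"
  assumes "relcat M"
    and "\<forall>n k W. 1 \<le> n \<longrightarrow> k \<le> n \<longrightarrow> relstruct n W \<longrightarrow>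
           (\<exists>(i, j)\<in>W. i \<noteq> j) \<longrightarrow>
           (k = 0 \<longrightarrow> (0, 1) \<in> W) \<longrightarrow>
           (k = n \<longrightarrow> (n - 1, n) \<in> W) \<longrightarrow>
           horn_extension M n k W"
  shows "Nxi_reedy_fibrant M"
proof -
  have "horns_extend M" using assms(2) by (simp add: horns_extend_def)
  then show ?thesis
    unfolding Nxi_reedy_fibrant_def using kan_fibration_Nxi_0 kan_fibration_Nxi_matching by blast
qed

end
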